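(* Suppose that $\mathcal X$ is a wide family of subsets of $\mathbb N$ and $\mathfrak A=(\alpha_X:X\in\mathcal X)$ is coherent. Then the C*-algebra $\mathcal M_{\mathcal X,\mathfrak A}$ is generated by its projections.
   Context: Fix an orthonormal basis $(e_k)$ of $\ell_2$. For $A\subseteq\mathbb N$, $P_A$ is the projection onto $\overline{\mathrm{span}}\{e_{2k},e_{2k+1}:k\in A\}$; $H_n=\mathrm{span}\{e_{2n},e_{2n+1}\}$. $\mathcal A_0$ is the set of $T\in\mathcal B(\ell_2)$ with $\langle Te_k,e_m\rangle\ne0\Rightarrow\{k,m\}\subseteq\{2n,2n+1\}$ for some $n$, written $T=(T_n)$ with $T_n\in\mathcal B(H_n)$; $\mathcal A_0(X)=\{T\in\mathcal A_0:T_n=0\ \forall n\notin X\}$. For $\alpha\in(71/72,1]$, $f_{\alpha,2n}=\alpha e_{2n}+\sqrt{1-\alpha^2}e_{2n+1}$, $f_{\alpha,2n+1}=\sqrt{1-\alpha^2}e_{2n}-\alpha e_{2n+1}$; $\mathcal D(X,\alpha)$: $T\in\mathcal A_0(X)$ with $T_n$ diagonal in $\{f_{\alpha,2n},f_{\alpha,2n+1}\}$ for $n\in X$; $\mathcal D_{\mathcal K}(X,\alpha)=\{S+R:S\in\mathcal D(X,\alpha),R\in\mathcal K(\ell_2)\cap\mathcal A_0(X)\}$. $\mathcal M_{\mathcal X,\mathfrak A}=\{T\in\mathcal A_0:P_XTP_X\in\mathcal D_{\mathcal K}(X,\alpha_X)\ \forall X\in\mathcal X\}$ (a C*-algebra).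 $\mathcal X$ is wide if every infinite subset of $\mathbb N$ has infinite intersection with some member of $\mathcal X$; $\mathfrak A$ is coherent if $\alpha_X\in(71/72,1]$ for all $X$ and $\alpha_X=\alpha_Y$ whenever $X\cap Y$ is infinite. *)

theory Defs
  imports Complex_Main
begin

text \<open>Vectors are functions nat => complex; operators are
 functions (nat => complex) => (nat => complex) that map l2 into l2, are linear
 and bounded on l2, and vanish outside l2 (this normalisation makes operator
 equality coincide with equality on l2).\<close>

definition l2 :: "(nat \<Rightarrow> complex) set" where
  "l2 = {x. summable (\<lambda>k. (cmod (x k))\<^sup>2)}"

definition l2norm :: "(nat \<Rightarrow> complex) \<Rightarrow> real" where
  "l2norm x = sqrt (\<Sum>k. (cmod (x k))\<^sup>2)"

definition l2inner :: "(nat \<Rightarrow> complex) \<Rightarrow> (nat \<Rightarrow> complex) \<Rightarrow> complex" where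
  "l2inner x y = (\<Sum>k. x k * cnj (y k))"

definition basis_vec :: "nat \<Rightarrow> nat \<Rightarrow> complex" ("\<e>") where
  "basis_vec k = (\<lambda>m. if m = k then 1 else 0)"

type_synonym op = "(nat \<Rightarrow> complex) \<Rightarrow> (nat \<Rightarrow> complex)"

definition bounded_ops :: "op set" where
  "bounded_ops = {T.
     (\<forall>x\<in>l2. T x \<in> l2) \<and>
     (\<forall>x\<in>l2. \<forall>y\<in>l2. \<forall>a b. T (\<lambda>k. a * x k + b * y k) = (\<lambda>k. a * T x k + b * T y k)) \<and>
     (\<exists>C. \<forall>x\<in>l2. l2norm (T x) \<le> C * l2norm x) \<and>
     (\<forall>x. x \<notin> l2 \<longrightarrow> T x = (\<lambda>k. 0))}"

definition op_add :: "op \<Rightarrow> op \<Rightarrow> op" where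
  "op_add S T = (\<lambda>x k. S x k + T x k)"

definition op_diff :: "op \<Rightarrow> op \<Rightarrow> op" where
  "op_diff S T = (\<lambda>x k. S x k - T x k)"

definition op_scale :: "complex \<Rightarrow> op \<Rightarrow> op" where
  "op_scale c T = (\<lambda>x k. c * T x k)"

definition opnorm :: "op \<Rightarrow> real" where
  "opnorm T = Sup {l2norm (T x) | x. x \<in> l2 \<and> l2norm x \<le> 1}"

definition adj :: "op \<Rightarrow> op" where
  "adj T = (\<lambda>y. if y \<in> l2 then (THE z. z \<in> l2 \<and> (\<forall>x\<in>l2. l2inner (T x) y = l2inner x z))
               else (\<lambda>k. 0))"

definition compact_op :: "op \<Rightarrow> bool" where
  "compact_op T \<longleftrightarrow> T \<in> bounded_ops \<and>
     (\<forall>\<epsilon>>0. \<exists>F. finite F \<and> F \<subseteq> l2 \<and>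
        (\<forall>x\<in>l2. l2norm x \<le> 1 \<longrightarrow> (\<exists>y\<in>F. l2norm (\<lambda>k. T x k - y k) < \<epsilon>)))"

definition is_projection :: "op \<Rightarrow> bool" where
  "is_projection P \<longleftrightarrow> P \<in> bounded_ops \<and> P \<circ> P = P \<and> adj P = P"

definition projP :: "nat set \<Rightarrow> op" where
  "projP A = (\<lambda>x k. if x \<in> l2 \<and> k div 2 \<in> A then x k else 0)"

text \<open>A_0: block diagonal operators (<T e_k, e_m> = (T (e k)) m).\<close>
definition A0 :: "op set" where
  "A0 = {T \<in> bounded_ops. \<forall>k m. T (\<e> k) m \<noteq> 0 \<longrightarrow> (\<exists>n. {k, m} \<subseteq> {2*n, 2*n+1})}"

definition A0_on :: "nat set \<Rightarrow> op set" where
  "A0_on X = {T \<in> A0. \<forall>n. n \<notin> X \<longrightarrow> T (\<e> (2*n)) = (\<lambda>k. 0) \<and> T (\<e> (2*n+1)) = (\<lambda>k. 0)}"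

definition fvec :: "real \<Rightarrow> nat \<Rightarrow> nat \<Rightarrow> complex" where
  "fvec \<alpha> k = (if even k
     then (\<lambda>m. complex_of_real \<alpha> * \<e> k m + complex_of_real (sqrt (1 - \<alpha>\<^sup>2)) * \<e> (k+1) m)
     else (\<lambda>m. complex_of_real (sqrt (1 - \<alpha>\<^sup>2)) * \<e> (k-1) m - complex_of_real \<alpha> * \<e> k m))"

definition Dset :: "nat set \<Rightarrow> real \<Rightarrow> op set" where
  "Dset X \<alpha> = {T \<in> A0_on X. \<forall>n\<in>X. \<exists>c d.
      T (fvec \<alpha> (2*n)) = (\<lambda>m. c * fvec \<alpha> (2*n) m) \<and>
      T (fvec \<alpha> (2*n+1)) = (\<lambda>m. d * fvec \<alpha> (2*n+1) m)}"

definition DKset :: "nat set \<Rightarrow> real \<Rightarrow> op set" where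
  "DKset X \<alpha> = {op_add S R | S R. S \<in> Dset X \<alpha> \<and> compact_op R \<and> R \<in> A0_on X}"

definition Mset :: "nat set set \<Rightarrow> (nat set \<Rightarrow> real) \<Rightarrow> op set" where
  "Mset \<X> \<alpha> = {T \<in> A0. \<forall>X\<in>\<X>. projP X \<circ> T \<circ> projP X \<in> DKset X (\<alpha> X)}"

definition wide :: "nat set set \<Rightarrow> bool" where
  "wide \<X> \<longleftrightarrow> (\<forall>A. infinite A \<longrightarrow> (\<exists>X\<in>\<X>. infinite (A \<inter> X)))"

definition coherent :: "nat set set \<Rightarrow> (nat set \<Rightarrow> real) \<Rightarrow> bool" where
  "coherent \<X> \<alpha> \<longleftrightarrow> (\<forall>X\<in>\<X>. 71/72 < \<alpha> X \<and> \<alpha> X \<le> 1) \<and>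
     (\<forall>X\<in>\<X>. \<forall>Y\<in>\<X>. infinite (X \<inter> Y) \<longrightarrow> \<alpha> X = \<alpha> Y)"

definition is_cstar_subalg :: "op set \<Rightarrow> bool" where
  "is_cstar_subalg C \<longleftrightarrow> C \<subseteq> bounded_ops \<and>
     (\<forall>S\<in>C. \<forall>T\<in>C. op_add S T \<in> C) \<and>
     (\<forall>c. \<forall>T\<in>C. op_scale c T \<in> C) \<and>
     (\<forall>S\<in>C. \<forall>T\<in>C. S \<circ> T \<in> C) \<and>
     (\<forall>T\<in>C. adj T \<in> C) \<and>
     (\<forall>T\<in>bounded_ops. (\<forall>\<epsilon>>0. \<exists>S\<in>C. opnorm (op_diff T S) < \<epsilon>) \<longrightarrow> T \<in> C)"

definition cstar_gen :: "op set \<Rightarrow> op set" where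
  "cstar_gen S = \<Inter>{C. S \<subseteq> C \<and> is_cstar_subalg C}"

end

theory Submission
  imports Defs "HOL-Analysis.L2_Norm"
begin

text \<open>An operator in \<open>\<A>\<^sub>0\<close> is block diagonal with \<open>2 \<times> 2\<close> blocks \<open>B\<^sub>n\<close>. Written in the bases
  \<open>f\<^sub>\<alpha>\<^sub>,\<^sub>2\<^sub>n, f\<^sub>\<alpha>\<^sub>,\<^sub>2\<^sub>n\<^sub>+\<^sub>1\<close>, the diagonal part of a compression \<open>P\<^sub>X T P\<^sub>X\<close> lies in
  \<open>\<D>(X, \<alpha>)\<close>, while a compact block diagonal operator is one whose blocks tend to \<open>0\<close>. Hence
  \<open>T \<in> \<M>\<^sub>\<X>\<^sub>,\<^sub>\<AA>\<close> iff for every \<open>X \<in> \<X>\<close> the off-diagonal entries of \<open>B\<^sub>n\<close> in the basis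
  \<open>f\<^bsub>\<alpha>\<^sub>X\<^esub>\<close> tend to \<open>0\<close> as \<open>n \<rightarrow> \<infinity>\<close> in \<open>X\<close>. This description is stable under the
  algebraic operations and under norm limits, so \<open>\<M>\<^sub>\<X>\<^sub>,\<^sub>\<AA>\<close> is a C*-algebra.

  For hermitian \<open>T \<in> \<M>\<^sub>\<X>\<^sub>,\<^sub>\<AA>\<close> and \<open>\<eta> > 0\<close>, let \<open>P\<^sub>k\<close> collect in every block the
  eigenprojections for the eigenvalues in \<open>[k \<eta>, (k + 1) \<eta>)\<close>, a block whose eigenvalues are less
  than \<open>\<eta>\<close> apart being treated as a scalar. Each block of \<open>P\<^sub>k\<close> has the form \<open>x I + y B\<^sub>n\<close> with
  \<open>\<bar>y\<bar> \<le> 1 / \<eta>\<close>, so \<open>P\<^sub>k\<close> is a projection in \<open>\<M>\<^sub>\<X>\<^sub>,\<^sub>\<AA>\<close>, and \<open>T\<close> is within \<open>2 \<eta>\<close>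
  of \<open>\<Sum>\<^sub>k k \<eta> P\<^sub>k\<close> in every entry, hence within \<open>4 \<eta>\<close> in norm. Splitting an arbitrary element
  into its real and imaginary parts shows that \<open>\<M>\<^sub>\<X>\<^sub>,\<^sub>\<AA>\<close> is generated by its projections.\<close>

unbundle lattice_syntax

section \<open>Null sequences, square-summable sequences and bounded operators\<close>

lemma LIMSEQ_zero_iff_finite: "f \<longlonglongrightarrow> 0 \<longleftrightarrow> (\<forall>e>0. finite {n. e \<le> cmod (f n)})"
  unfolding tendsto_iff cofinite_eq_sequentially[symmetric] eventually_cofinite
  by (simp add: not_less)

lemma tendsto_zero_mult_bounded:
  fixes f g :: "'a \<Rightarrow> complex"
  assumes "(f \<longlongrightarrow> 0) F" "\<And>x. cmod (g x) \<le> K"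
  shows "((\<lambda>x. g x * f x) \<longlongrightarrow> 0) F" "((\<lambda>x. f x * g x) \<longlongrightarrow> 0) F"
proof -
  have "cmod (g x * f x) \<le> cmod (f x) * K" for x
    using mult_right_mono[OF assms(2)[of x] norm_ge_zero[of "f x"]] by (simp add: norm_mult mult.commute)
  then show "((\<lambda>x. g x * f x) \<longlongrightarrow> 0) F" "((\<lambda>x. f x * g x) \<longlongrightarrow> 0) F"
    by (auto intro!: tendsto_0_le[OF assms(1) always_eventually] simp: mult.commute)
qed

lemma tendsto_zero_uniform_approx:
  fixes f :: "'a \<Rightarrow> complex"
  assumes "\<And>e. e > 0 \<Longrightarrow> \<exists>g. (g \<longlongrightarrow> 0) F \<and> (\<forall>x. cmod (f x - g x) \<le> e)"
  shows "(f \<longlongrightarrow> 0) F"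
  unfolding tendsto_iff
proof (intro allI impI)
  fix e :: real
  assume "e > 0"
  then obtain g where g: "(g \<longlongrightarrow> 0) F" "\<And>x. cmod (f x - g x) \<le> e / 2"
    using assms[of "e / 2"] by auto
  have "\<forall>\<^sub>F x in F. dist (g x) 0 < e / 2"
    using tendsto_iff[THEN iffD1, OF g(1), rule_format, of "e / 2"] \<open>e > 0\<close> by simp
  then show "\<forall>\<^sub>F x in F. dist (f x) 0 < e"
  proof (rule eventually_mono)
    fix x
    assume "dist (g x) 0 < e / 2"
    then show "dist (f x) 0 < e"
      using g(2)[of x] norm_triangle_ineq2[of "f x" "g x"] by simp
  qed
qed

lemma tendsto_zero_restrict:
  fixes f :: "nat \<Rightarrow> complex"
  assumes "(f \<longlongrightarrow> 0) (sequentially \<sqinter> principal X)"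
  shows "(\<lambda>n. if n \<in> X then f n else 0) \<longlonglongrightarrow> 0"
  unfolding tendsto_iff
proof (intro allI impI)
  fix e :: real
  assume "e > 0"
  then have "\<forall>\<^sub>F n in sequentially. n \<in> X \<longrightarrow> dist (f n) 0 < e"
    using assms unfolding tendsto_iff eventually_inf_principal by blast
  then show "\<forall>\<^sub>F n in sequentially. dist (if n \<in> X then f n else 0) 0 < e"
    by (rule eventually_mono) (use \<open>e > 0\<close> in auto)
qed

lemma l2_zero [simp]: "(\<lambda>k. 0) \<in> l2"
  by (simp add: l2_def)

lemma l2_finite_support:
  assumes "\<And>k. N \<le> k \<Longrightarrow> x k = 0"
  shows "x \<in> l2"
  unfolding l2_def using assms
  by (auto intro!: summable_finite[of "{..<N}"]) (metis not_le)

lemma basis_vec_l2 [simp]: "\<e> k \<in> l2"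
  by (rule l2_finite_support[of "Suc k"]) (simp add: basis_vec_def)

lemma l2_lincomb:
  assumes "x \<in> l2" "y \<in> l2"
  shows "(\<lambda>k. a * x k + b * y k) \<in> l2"
proof -
  have bound: "(cmod (a * x k + b * y k))\<^sup>2 \<le> 2 * (cmod a)\<^sup>2 * (cmod (x k))\<^sup>2 + 2 * (cmod b)\<^sup>2 * (cmod (y k))\<^sup>2"
    for k
  proof -
    have "cmod (a * x k + b * y k) \<le> cmod a * cmod (x k) + cmod b * cmod (y k)"
      by (metis norm_mult norm_triangle_ineq)
    then have "(cmod (a * x k + b * y k))\<^sup>2 \<le> (cmod a * cmod (x k) + cmod b * cmod (y k))\<^sup>2"
      by (simp add: power_mono)
    also have "\<dots> \<le> 2 * (cmod a * cmod (x k))\<^sup>2 + 2 * (cmod b * cmod (y k))\<^sup>2"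
      by (smt (verit) zero_le_power2 power2_diff power2_sum)
    finally show ?thesis
      by (simp add: power_mult_distrib)
  qed
  have "summable (\<lambda>k. 2 * (cmod a)\<^sup>2 * (cmod (x k))\<^sup>2 + 2 * (cmod b)\<^sup>2 * (cmod (y k))\<^sup>2)"
    using assms by (auto simp: l2_def intro!: summable_add summable_mult)
  then show ?thesis
    unfolding l2_def mem_Collect_eq by (rule summable_comparison_test') (use bound in auto)
qed

lemma l2_diff: "x \<in> l2 \<Longrightarrow> y \<in> l2 \<Longrightarrow> (\<lambda>k. x k - y k) \<in> l2"
  using l2_lincomb[of x y 1 "-1"] by simp

lemma l2_uminus: "x \<in> l2 \<Longrightarrow> (\<lambda>k. - x k) \<in> l2"
  by (simp add: l2_def)

lemma l2norm_nonneg: "x \<in> l2 \<Longrightarrow> 0 \<le> l2norm x"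
  unfolding l2norm_def l2_def by (auto intro!: suminf_nonneg)

lemma l2norm_square: "x \<in> l2 \<Longrightarrow> (l2norm x)\<^sup>2 = (\<Sum>k. (cmod (x k))\<^sup>2)"
  unfolding l2norm_def l2_def by (simp add: suminf_nonneg)

lemma norm_le_l2norm: "x \<in> l2 \<Longrightarrow> cmod (x m) \<le> l2norm x"
  unfolding l2norm_def l2_def
  by (rule real_le_rsqrt) (use sum_le_suminf[of "\<lambda>k. (cmod (x k))\<^sup>2" "{m}"] in auto)

lemma l2norm_basis_vec [simp]: "l2norm (\<e> k) = 1"
proof -
  have "(\<Sum>j. (cmod (\<e> k j))\<^sup>2) = (\<Sum>j\<in>{k}. (cmod (\<e> k j))\<^sup>2)"
    by (rule suminf_finite) (auto simp: basis_vec_def)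
  then show ?thesis
    by (simp add: l2norm_def basis_vec_def)
qed

lemma l2norm_uminus [simp]: "l2norm (\<lambda>k. - x k) = l2norm x"
  by (simp add: l2norm_def)

text \<open>Minkowski's inequality, from its finite version on the initial segments.\<close>

lemma l2norm_triangle:
  assumes x: "x \<in> l2" and y: "y \<in> l2"
  shows "l2norm (\<lambda>k. x k + y k) \<le> l2norm x + l2norm y"
proof -
  have partial: "L2_set (\<lambda>k. cmod (z k)) {..<N} \<le> l2norm z" if "z \<in> l2" for z N
    using that unfolding L2_set_def l2norm_def l2_def
    by (intro real_sqrt_le_mono sum_le_suminf) auto
  have "(\<Sum>k<N. (cmod (x k + y k))\<^sup>2) \<le> (l2norm x + l2norm y)\<^sup>2" for N
  proof -
    have "L2_set (\<lambda>k. cmod (x k + y k)) {..<N} \<le> L2_set (\<lambda>k. cmod (x k) + cmod (y k)) {..<N}"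
      by (rule L2_set_mono) (auto intro: norm_triangle_ineq)
    also have "\<dots> \<le> l2norm x + l2norm y"
      using L2_set_triangle_ineq[of "\<lambda>k. cmod (x k)" "\<lambda>k. cmod (y k)" "{..<N}"]
        partial[OF x, of N] partial[OF y, of N] by linarith
    finally show ?thesis
      unfolding L2_set_def by (auto dest: sqrt_le_D)
  qed
  then have "(\<Sum>k. (cmod (x k + y k))\<^sup>2) \<le> (l2norm x + l2norm y)\<^sup>2"
    using l2_lincomb[OF x y, of 1 1] by (intro suminf_le_const) (auto simp: l2_def)
  then show ?thesis
    unfolding l2norm_def[of "\<lambda>k. x k + y k"]
    using l2norm_nonneg[OF x] l2norm_nonneg[OF y] by (simp add: real_le_lsqrt)
qed

definition truncate :: "nat \<Rightarrow> (nat \<Rightarrow> complex) \<Rightarrow> nat \<Rightarrow> complex" where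
  "truncate N x = (\<lambda>k. if k < N then x k else 0)"

lemma truncate_l2 [simp]: "truncate N x \<in> l2"
  by (rule l2_finite_support[of N]) (simp add: truncate_def)

lemma l2norm_minus_truncate_tendsto:
  assumes "x \<in> l2"
  shows "(\<lambda>N. l2norm (\<lambda>k. x k - truncate N x k)) \<longlonglongrightarrow> 0"
proof -
  define g where "g k = (cmod (x k))\<^sup>2" for k
  have g: "summable g"
    using assms by (simp add: l2_def g_def[abs_def])
  have "(l2norm (\<lambda>k. x k - truncate N x k))\<^sup>2 = suminf g - (\<Sum>k<N. g k)" for N
  proof -
    have "(\<lambda>k. (cmod (x k - truncate N x k))\<^sup>2) = (\<lambda>k. g k - (if k < N then g k else 0))"
      by (auto simp: truncate_def g_def)
    moreover have "(\<Sum>k. if k < N then g k else 0) = (\<Sum>k<N. g k)"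
      by (subst suminf_finite[of "{..<N}"]) auto
    ultimately show ?thesis
      using suminf_diff[OF g summable_finite[of "{..<N}" "\<lambda>k. if k < N then g k else 0"]]
      by (simp add: l2norm_square l2_diff assms)
  qed
  moreover have "(\<lambda>N. suminf g - (\<Sum>k<N. g k)) \<longlonglongrightarrow> 0"
    using tendsto_diff[OF tendsto_const[of "suminf g"] summable_LIMSEQ[OF g]] by simp
  ultimately have "(\<lambda>N. (l2norm (\<lambda>k. x k - truncate N x k))\<^sup>2) \<longlonglongrightarrow> 0"
    by simp
  then have "(\<lambda>N. sqrt ((l2norm (\<lambda>k. x k - truncate N x k))\<^sup>2)) \<longlonglongrightarrow> 0"
    using tendsto_real_sqrt by fastforce
  then show ?thesis
    by (simp add: l2norm_nonneg l2_diff assms)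
qed

lemma bounded_ops_l2: "T \<in> bounded_ops \<Longrightarrow> T x \<in> l2"
  unfolding bounded_ops_def by (cases "x \<in> l2") auto

lemma bounded_ops_lincomb:
  "T \<in> bounded_ops \<Longrightarrow> x \<in> l2 \<Longrightarrow> y \<in> l2 \<Longrightarrow> T (\<lambda>k. a * x k + b * y k) = (\<lambda>k. a * T x k + b * T y k)"
  unfolding bounded_ops_def by blast

lemma bounded_ops_bound: "T \<in> bounded_ops \<Longrightarrow> \<exists>C. \<forall>x\<in>l2. l2norm (T x) \<le> C * l2norm x"
  unfolding bounded_ops_def by blast

lemma bounded_ops_outside: "T \<in> bounded_ops \<Longrightarrow> x \<notin> l2 \<Longrightarrow> T x = (\<lambda>k. 0)"
  unfolding bounded_ops_def by blast

lemma bounded_ops_diff_apply: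
  "T \<in> bounded_ops \<Longrightarrow> x \<in> l2 \<Longrightarrow> y \<in> l2 \<Longrightarrow> T (\<lambda>k. x k - y k) = (\<lambda>k. T x k - T y k)"
  using bounded_ops_lincomb[of T x y 1 "-1"] by simp

lemma bounded_ops_truncate:
  assumes "T \<in> bounded_ops"
  shows "T (truncate N x) = (\<lambda>m. \<Sum>k<N. x k * T (\<e> k) m)"
proof (induction N)
  case 0
  have "truncate 0 x = (\<lambda>k. 0 * 0 + 0 * 0)"
    by (simp add: truncate_def)
  then show ?case
    using bounded_ops_lincomb[OF assms l2_zero l2_zero, of 0 0] by simp
next
  case (Suc N)
  have "truncate (Suc N) x = (\<lambda>k. 1 * truncate N x k + x N * \<e> N k)"
    by (auto simp: truncate_def basis_vec_def fun_eq_iff less_Suc_eq)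
  then show ?case
    using Suc bounded_ops_lincomb[OF assms truncate_l2 basis_vec_l2, of 1 N x "x N" N] by simp
qed

lemma bounded_ops_diff:
  assumes S: "S \<in> bounded_ops" and T: "T \<in> bounded_ops"
  shows "op_diff S T \<in> bounded_ops"
proof -
  obtain C D where C: "\<forall>x\<in>l2. l2norm (S x) \<le> C * l2norm x" and D: "\<forall>x\<in>l2. l2norm (T x) \<le> D * l2norm x"
    using bounded_ops_bound[OF S] bounded_ops_bound[OF T] by blast
  have "l2norm (op_diff S T x) \<le> (C + D) * l2norm x" if "x \<in> l2" for x
  proof -
    have "l2norm (op_diff S T x) \<le> l2norm (S x) + l2norm (\<lambda>k. - T x k)"
      unfolding op_diff_def diff_conv_add_uminus
      by (intro l2norm_triangle bounded_ops_l2[OF S] l2_uminus bounded_ops_l2[OF T])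
    moreover have "l2norm (S x) \<le> C * l2norm x" "l2norm (T x) \<le> D * l2norm x"
      using C D that by auto
    ultimately show ?thesis
      by (simp add: distrib_right)
  qed
  moreover have "op_diff S T (\<lambda>k. a * x k + b * y k) = (\<lambda>k. a * op_diff S T x k + b * op_diff S T y k)"
    if "x \<in> l2" "y \<in> l2" for x y a b
    using bounded_ops_lincomb[OF S that] bounded_ops_lincomb[OF T that]
    by (simp add: op_diff_def fun_eq_iff algebra_simps)
  ultimately show ?thesis
    unfolding bounded_ops_def op_diff_def
    using S T l2_diff bounded_ops_l2 bounded_ops_outside by (auto simp: op_diff_def)
qed

lemma bounded_ops_eqI:
  assumes S: "S \<in> bounded_ops" and T: "T \<in> bounded_ops" and basis: "\<And>k. S (\<e> k) = T (\<e> k)"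
  shows "S = T"
proof (intro ext)
  fix x m
  show "S x m = T x m"
  proof (cases "x \<in> l2")
    case x: True
    define D where "D = op_diff S T"
    have D: "D \<in> bounded_ops"
      unfolding D_def by (rule bounded_ops_diff[OF S T])
    obtain C where C: "\<forall>x\<in>l2. l2norm (D x) \<le> C * l2norm x"
      using bounded_ops_bound[OF D] by blast
    have "D (truncate N x) = (\<lambda>k. 0)" for N
      unfolding bounded_ops_truncate[OF D] by (simp add: D_def op_diff_def basis)
    then have "D x = D (\<lambda>k. x k - truncate N x k)" for N
      using bounded_ops_diff_apply[OF D x truncate_l2] by simp
    then have "l2norm (D x) \<le> C * l2norm (\<lambda>k. x k - truncate N x k)" for N
      using C l2_diff[OF x truncate_l2] by metis
    moreover have "(\<lambda>N. C * l2norm (\<lambda>k. x k - truncate N x k)) \<longlonglongrightarrow> 0"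
      using tendsto_mult_right_zero[OF l2norm_minus_truncate_tendsto[OF x]] .
    ultimately have "l2norm (D x) \<le> 0"
      by (intro LIMSEQ_le_const) auto
    then have "D x m = 0"
      using norm_le_l2norm[OF bounded_ops_l2[OF D], of x m] by (meson norm_le_zero_iff order_trans)
    then show ?thesis
      by (simp add: D_def op_diff_def)
  next
    case False
    then show ?thesis
      using bounded_ops_outside[OF S] bounded_ops_outside[OF T] by simp
  qed
qed

lemma opnorm_le:
  assumes "\<And>x. x \<in> l2 \<Longrightarrow> l2norm x \<le> 1 \<Longrightarrow> l2norm (T x) \<le> M"
  shows "opnorm T \<le> M"
  unfolding opnorm_def
proof (rule cSup_least)
  show "{l2norm (T x) |x. x \<in> l2 \<and> l2norm x \<le> 1} \<noteq> {}"
    using l2_zero by (auto intro!: exI[of _ "\<lambda>k. 0"] simp: l2norm_def)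
qed (use assms in blast)

lemma norm_entry_le_opnorm:
  assumes T: "T \<in> bounded_ops"
  shows "cmod (T (\<e> k) m) \<le> opnorm T"
proof -
  obtain C where C: "\<forall>x\<in>l2. l2norm (T x) \<le> C * l2norm x"
    using bounded_ops_bound[OF T] by blast
  have "l2norm (T x) \<le> \<bar>C\<bar>" if "x \<in> l2" "l2norm x \<le> 1" for x
  proof -
    have "l2norm (T x) \<le> C * l2norm x"
      using C that by blast
    also have "\<dots> \<le> \<bar>C\<bar> * l2norm x"
      by (intro mult_right_mono) (auto simp: l2norm_nonneg that)
    also have "\<dots> \<le> \<bar>C\<bar>"
      using that by (simp add: mult_left_le)
    finally show ?thesis .
  qed
  then have bdd: "bdd_above {l2norm (T x) |x. x \<in> l2 \<and> l2norm x \<le> 1}"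
    by (auto intro!: bdd_aboveI)
  have "l2norm (T (\<e> k)) \<in> {l2norm (T x) |x. x \<in> l2 \<and> l2norm x \<le> 1}"
    using l2norm_basis_vec basis_vec_l2 by (metis (mono_tags, lifting) mem_Collect_eq order_refl)
  then have "l2norm (T (\<e> k)) \<le> opnorm T"
    unfolding opnorm_def using bdd by (rule cSup_upper)
  then show ?thesis
    by (rule order_trans[OF norm_le_l2norm[OF bounded_ops_l2[OF T]]])
qed

section \<open>Block diagonal operators\<close>

type_synonym blocks = "nat \<Rightarrow> nat \<Rightarrow> nat \<Rightarrow> complex"

text \<open>\<^term>\<open>B n\<close> is read as the \<open>2 \<times> 2\<close> matrix, with indices \<open>i, j < 2\<close>, of an operator on
  \<open>H\<^sub>n\<close> in the basis \<open>e\<^sub>2\<^sub>n, e\<^sub>2\<^sub>n\<^sub>+\<^sub>1\<close>; the entries with larger indices are ignored.\<close>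

definition block_op :: "blocks \<Rightarrow> op" where
  "block_op B = (\<lambda>x m. if x \<in> l2
     then B (m div 2) (m mod 2) 0 * x (2 * (m div 2)) + B (m div 2) (m mod 2) 1 * x (2 * (m div 2) + 1)
     else 0)"

definition block_entry :: "op \<Rightarrow> blocks" where
  "block_entry T n i j = T (\<e> (2 * n + j)) (2 * n + i)"

definition blocks_bounded :: "blocks \<Rightarrow> real \<Rightarrow> bool" where
  "blocks_bounded B K \<longleftrightarrow> (\<forall>n i j. i < 2 \<longrightarrow> j < 2 \<longrightarrow> cmod (B n i j) \<le> K)"

definition blocks_mult :: "blocks \<Rightarrow> blocks \<Rightarrow> blocks" where
  "blocks_mult B C = (\<lambda>n i j. B n i 0 * C n 0 j + B n i 1 * C n 1 j)"

definition blocks_adj :: "blocks \<Rightarrow> blocks" where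
  "blocks_adj B = (\<lambda>n i j. cnj (B n j i))"

definition restrict_blocks :: "nat set \<Rightarrow> blocks \<Rightarrow> blocks" where
  "restrict_blocks X B = (\<lambda>n i j. if n \<in> X then B n i j else 0)"

lemma less_2_cases: "(i::nat) < 2 \<Longrightarrow> i = 0 \<or> i = 1"
  by auto

lemma less_2_pair_cases:
  fixes i j :: nat
  assumes "i < 2" "j < 2"
  obtains "i = 0" "j = 0" | "i = 0" "j = 1" | "i = 1" "j = 0" | "i = 1" "j = 1"
  using less_2_cases[OF assms(1)] less_2_cases[OF assms(2)] by blast

lemma blocks_boundedD: "blocks_bounded B K \<Longrightarrow> i < 2 \<Longrightarrow> j < 2 \<Longrightarrow> cmod (B n i j) \<le> K"
  by (simp add: blocks_bounded_def)

lemma blocks_bounded_nonneg: "blocks_bounded B K \<Longrightarrow> 0 \<le> K"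
  using blocks_boundedD[of B K 0 0 0] by (meson norm_ge_zero order_trans zero_less_numeral)

lemma blocks_bounded_add:
  "blocks_bounded B K \<Longrightarrow> blocks_bounded C L \<Longrightarrow> blocks_bounded (\<lambda>n i j. B n i j + C n i j) (K + L)"
  unfolding blocks_bounded_def by (meson add_mono norm_triangle_le)

lemma blocks_bounded_diff:
  "blocks_bounded B K \<Longrightarrow> blocks_bounded C L \<Longrightarrow> blocks_bounded (\<lambda>n i j. B n i j - C n i j) (K + L)"
  unfolding blocks_bounded_def by (meson add_mono norm_triangle_le_diff)

lemma blocks_bounded_scale: "blocks_bounded B K \<Longrightarrow> blocks_bounded (\<lambda>n i j. c * B n i j) (cmod c * K)"
  unfolding blocks_bounded_def by (simp add: norm_mult mult_left_mono)

lemma blocks_bounded_adj: "blocks_bounded B K \<Longrightarrow> blocks_bounded (blocks_adj B) K"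
  unfolding blocks_bounded_def blocks_adj_def by simp

lemma blocks_bounded_restrict: "blocks_bounded B K \<Longrightarrow> blocks_bounded (restrict_blocks X B) K"
  using blocks_bounded_nonneg by (auto simp: blocks_bounded_def restrict_blocks_def)

lemma blocks_bounded_mult:
  assumes B: "blocks_bounded B K" and C: "blocks_bounded C L"
  shows "blocks_bounded (blocks_mult B C) (2 * K * L)"
  unfolding blocks_bounded_def blocks_mult_def
proof (intro allI impI)
  fix n i j :: nat
  assume "i < 2" "j < 2"
  have "cmod (B n i 0 * C n 0 j + B n i 1 * C n 1 j) \<le> cmod (B n i 0) * cmod (C n 0 j) + cmod (B n i 1) * cmod (C n 1 j)"
    unfolding norm_mult[symmetric] by (rule norm_triangle_ineq)
  also have "\<dots> \<le> K * L + K * L"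
    using \<open>i < 2\<close> \<open>j < 2\<close> blocks_bounded_nonneg[OF B]
    by (intro add_mono mult_mono blocks_boundedD[OF B] blocks_boundedD[OF C]) auto
  finally show "cmod (B n i 0 * C n 0 j + B n i 1 * C n 1 j) \<le> 2 * K * L"
    by simp
qed

lemma sum_lessThan_double: "(\<Sum>m<2 * (n::nat). f m) = (\<Sum>b<n. f (2 * b) + f (2 * b + 1))"
proof (induction n)
  case (Suc n)
  have "2 * Suc n = Suc (Suc (2 * n))"
    by simp
  then show ?case
    using Suc by (simp add: add.assoc)
qed simp

lemma norm_block_op_square_le:
  assumes B: "blocks_bounded B K" and x: "x \<in> l2"
  shows "(cmod (block_op B x m))\<^sup>2 \<le> 2 * K\<^sup>2 * ((cmod (x (2 * (m div 2))))\<^sup>2 + (cmod (x (2 * (m div 2) + 1)))\<^sup>2)"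
proof -
  let ?b = "m div 2"
  have "cmod (block_op B x m) \<le> cmod (B ?b (m mod 2) 0) * cmod (x (2 * ?b)) + cmod (B ?b (m mod 2) 1) * cmod (x (2 * ?b + 1))"
    using x unfolding block_op_def norm_mult[symmetric] by (simp add: norm_triangle_ineq)
  also have "\<dots> \<le> K * cmod (x (2 * ?b)) + K * cmod (x (2 * ?b + 1))"
    by (intro add_mono mult_right_mono blocks_boundedD[OF B]) auto
  finally have "(cmod (block_op B x m))\<^sup>2 \<le> (K * cmod (x (2 * ?b)) + K * cmod (x (2 * ?b + 1)))\<^sup>2"
    by (simp add: power_mono)
  also have "\<dots> \<le> 2 * (K * cmod (x (2 * ?b)))\<^sup>2 + 2 * (K * cmod (x (2 * ?b + 1)))\<^sup>2"
    by (smt (verit) zero_le_power2 power2_diff power2_sum)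
  finally show ?thesis
    unfolding power_mult_distrib by (simp add: ring_distribs)
qed

lemma block_op_summable_le:
  assumes B: "blocks_bounded B K" and x: "x \<in> l2"
  shows "summable (\<lambda>m. (cmod (block_op B x m))\<^sup>2)"
    and "(\<Sum>m. (cmod (block_op B x m))\<^sup>2) \<le> 4 * K\<^sup>2 * (\<Sum>m. (cmod (x m))\<^sup>2)"
proof -
  define f where "f m = (cmod (block_op B x m))\<^sup>2" for m
  define g where "g m = (cmod (x m))\<^sup>2" for m
  have g: "summable g"
    using x by (simp add: l2_def g_def[abs_def])
  have f_le: "f m \<le> 2 * K\<^sup>2 * (g (2 * (m div 2)) + g (2 * (m div 2) + 1))" for m
    unfolding f_def g_def by (rule norm_block_op_square_le[OF B x])
  have partial: "(\<Sum>m<N. f m) \<le> 4 * K\<^sup>2 * suminf g" for N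
  proof -
    have "(\<Sum>m<N. f m) \<le> (\<Sum>m<2 * N. f m)"
      by (intro sum_mono2) (auto simp: f_def)
    also have "\<dots> = (\<Sum>b<N. f (2 * b) + f (2 * b + 1))"
      by (rule sum_lessThan_double)
    also have "\<dots> \<le> (\<Sum>b<N. 4 * K\<^sup>2 * (g (2 * b) + g (2 * b + 1)))"
    proof (rule sum_mono)
      fix b
      show "f (2 * b) + f (2 * b + 1) \<le> 4 * K\<^sup>2 * (g (2 * b) + g (2 * b + 1))"
        using f_le[of "2 * b"] f_le[of "2 * b + 1"] by simp
    qed
    also have "\<dots> = 4 * K\<^sup>2 * (\<Sum>m<2 * N. g m)"
      by (simp add: sum_lessThan_double sum_distrib_left)
    also have "\<dots> \<le> 4 * K\<^sup>2 * suminf g"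
      by (intro mult_left_mono sum_le_suminf[OF g]) (auto simp: g_def)
    finally show ?thesis .
  qed
  show f: "summable (\<lambda>m. (cmod (block_op B x m))\<^sup>2)"
    using summableI_nonneg_bounded[OF _ partial] by (simp add: f_def[abs_def])
  show "(\<Sum>m. (cmod (block_op B x m))\<^sup>2) \<le> 4 * K\<^sup>2 * (\<Sum>m. (cmod (x m))\<^sup>2)"
    using suminf_le_const[OF f partial[unfolded f_def]] by (simp add: g_def[abs_def])
qed

lemma block_op_l2:
  assumes B: "blocks_bounded B K"
  shows "block_op B x \<in> l2"
proof (cases "x \<in> l2")
  case True
  then show ?thesis
    using block_op_summable_le(1)[OF B True] by (simp add: l2_def)
qed (simp add: block_op_def)

lemma block_op_norm_le:
  assumes B: "blocks_bounded B K" and x: "x \<in> l2"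
  shows "l2norm (block_op B x) \<le> 2 * K * l2norm x"
proof (rule power2_le_imp_le)
  show "(l2norm (block_op B x))\<^sup>2 \<le> (2 * K * l2norm x)\<^sup>2"
    using block_op_summable_le(2)[OF B x]
    by (simp add: l2norm_square[OF x] l2norm_square[OF block_op_l2[OF B]] power_mult_distrib)
  show "0 \<le> 2 * K * l2norm x"
    using blocks_bounded_nonneg[OF B] l2norm_nonneg[OF x] by simp
qed

lemma l2norm_block_op_le:
  assumes "blocks_bounded B K" "x \<in> l2" "l2norm x \<le> 1"
  shows "l2norm (block_op B x) \<le> 2 * K"
proof -
  have "l2norm (block_op B x) \<le> 2 * K * l2norm x"
    by (rule block_op_norm_le[OF assms(1,2)])
  also have "\<dots> \<le> 2 * K"
    using mult_left_le[OF assms(3)] blocks_bounded_nonneg[OF assms(1)] by simp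
  finally show ?thesis .
qed

lemma block_op_bounded:
  assumes B: "blocks_bounded B K"
  shows "block_op B \<in> bounded_ops"
  unfolding bounded_ops_def
proof (intro CollectI conjI ballI allI impI)
  show "block_op B x \<in> l2" for x
    by (rule block_op_l2[OF B])
  show "block_op B (\<lambda>k. a * x k + b * y k) = (\<lambda>k. a * block_op B x k + b * block_op B y k)"
    if "x \<in> l2" "y \<in> l2" for x y a b
    using that l2_lincomb[OF that] by (simp add: block_op_def fun_eq_iff ring_distribs)
  show "\<exists>C. \<forall>x\<in>l2. l2norm (block_op B x) \<le> C * l2norm x"
    using block_op_norm_le[OF B] by blast
  show "block_op B x = (\<lambda>k. 0)" if "x \<notin> l2" for x
    using that by (simp add: block_op_def)
qed

lemma opnorm_block_op_le: "blocks_bounded B K \<Longrightarrow> opnorm (block_op B) \<le> 2 * K"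
  by (rule opnorm_le) (rule l2norm_block_op_le)

lemma block_op_basis_vec:
  "block_op B (\<e> k) m = (if k div 2 = m div 2 then B (m div 2) (m mod 2) (k mod 2) else 0)"
proof -
  have e: "block_op B (\<e> k) m = B (m div 2) (m mod 2) 0 * \<e> k (2 * (m div 2))
      + B (m div 2) (m mod 2) 1 * \<e> k (2 * (m div 2) + 1)"
    by (simp add: block_op_def)
  consider "k = 2 * (m div 2)" | "k = 2 * (m div 2) + 1" | "k div 2 \<noteq> m div 2"
    by linarith
  then show ?thesis
  proof cases
    case 3
    then have "k \<noteq> 2 * (m div 2)" "k \<noteq> 2 * (m div 2) + 1"
      by auto
    with 3 show ?thesis
      unfolding e by (simp add: basis_vec_def)
  qed (subst e, simp add: basis_vec_def)+
qed

lemma block_entry_block_op: "i < 2 \<Longrightarrow> j < 2 \<Longrightarrow> block_entry (block_op B) n i j = B n i j"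
  unfolding block_entry_def block_op_basis_vec by auto

lemma block_op_cong:
  assumes "\<And>n i j. i < 2 \<Longrightarrow> j < 2 \<Longrightarrow> B n i j = C n i j"
  shows "block_op B = block_op C"
  using assms by (simp add: block_op_def fun_eq_iff)

lemma block_op_A0:
  assumes "blocks_bounded B K"
  shows "block_op B \<in> A0"
  unfolding A0_def
proof (intro CollectI conjI allI impI)
  show "block_op B \<in> bounded_ops"
    by (rule block_op_bounded[OF assms])
  fix k m :: nat
  assume "block_op B (\<e> k) m \<noteq> 0"
  then have "k div 2 = m div 2"
    unfolding block_op_basis_vec by (auto split: if_splits)
  then show "\<exists>n. {k, m} \<subseteq> {2 * n, 2 * n + 1}"
    by (intro exI[of _ "m div 2"]) auto
qed

lemma A0_bounded_ops: "T \<in> A0 \<Longrightarrow> T \<in> bounded_ops"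
  by (simp add: A0_def)

lemma A0_entry_eq_0: "T \<in> A0 \<Longrightarrow> k div 2 \<noteq> m div 2 \<Longrightarrow> T (\<e> k) m = 0"
  unfolding A0_def by fastforce

lemma blocks_bounded_block_entry:
  assumes T: "T \<in> bounded_ops"
  shows "\<exists>K. blocks_bounded (block_entry T) K"
proof -
  obtain C where "\<forall>x\<in>l2. l2norm (T x) \<le> C * l2norm x"
    using bounded_ops_bound[OF T] by blast
  then have "l2norm (T (\<e> k)) \<le> C" for k
    by (metis basis_vec_l2 l2norm_basis_vec mult.right_neutral)
  then have "cmod (T (\<e> k) m) \<le> C" for k m
    by (rule order_trans[OF norm_le_l2norm[OF bounded_ops_l2[OF T]]])
  then show ?thesis
    unfolding blocks_bounded_def block_entry_def by blast
qed

lemma A0_eq_block_op: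
  assumes T: "T \<in> A0"
  shows "T = block_op (block_entry T)"
proof (rule bounded_ops_eqI)
  show "T \<in> bounded_ops"
    using T by (rule A0_bounded_ops)
  then show "block_op (block_entry T) \<in> bounded_ops"
    using blocks_bounded_block_entry block_op_bounded by blast
  show "T (\<e> k) = block_op (block_entry T) (\<e> k)" for k
  proof
    fix m
    show "T (\<e> k) m = block_op (block_entry T) (\<e> k) m"
    proof (cases "k div 2 = m div 2")
      case True
      then have "2 * (m div 2) + k mod 2 = k" "2 * (m div 2) + m mod 2 = m"
        using mult_div_mod_eq[of 2 k] mult_div_mod_eq[of 2 m] by simp_all
      then show ?thesis
        using True by (simp add: block_op_basis_vec block_entry_def)
    qed (simp add: block_op_basis_vec A0_entry_eq_0[OF T])
  qed
qed

lemma norm_entry_diff_le_opnorm: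
  assumes "T \<in> bounded_ops" "S \<in> bounded_ops"
  shows "cmod (T (\<e> k) m - S (\<e> k) m) \<le> opnorm (op_diff T S)"
  using norm_entry_le_opnorm[OF bounded_ops_diff[OF assms]] by (simp add: op_diff_def)

lemma A0_closed:
  assumes T: "T \<in> bounded_ops" and approx: "\<And>e. e > 0 \<Longrightarrow> \<exists>S\<in>A0. opnorm (op_diff T S) < e"
  shows "T \<in> A0"
  unfolding A0_def
proof (intro CollectI conjI T allI impI)
  fix k m :: nat
  assume "T (\<e> k) m \<noteq> 0"
  have "k div 2 = m div 2"
  proof (rule ccontr)
    assume km: "k div 2 \<noteq> m div 2"
    obtain S where S: "S \<in> A0" "opnorm (op_diff T S) < cmod (T (\<e> k) m)"
      using approx[of "cmod (T (\<e> k) m)"] \<open>T (\<e> k) m \<noteq> 0\<close> by auto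
    then show False
      using norm_entry_diff_le_opnorm[OF T A0_bounded_ops[OF S(1)], of k m] A0_entry_eq_0[OF S(1) km] by simp
  qed
  then show "\<exists>n. {k, m} \<subseteq> {2 * n, 2 * n + 1}"
    by (intro exI[of _ "m div 2"]) auto
qed

lemma op_add_block_op: "op_add (block_op B) (block_op C) = block_op (\<lambda>n i j. B n i j + C n i j)"
  by (auto simp: op_add_def block_op_def fun_eq_iff ring_distribs)

lemma op_diff_block_op: "op_diff (block_op B) (block_op C) = block_op (\<lambda>n i j. B n i j - C n i j)"
  by (auto simp: op_diff_def block_op_def fun_eq_iff left_diff_distrib)

lemma op_scale_block_op: "op_scale c (block_op B) = block_op (\<lambda>n i j. c * B n i j)"
  by (auto simp: op_scale_def block_op_def fun_eq_iff ring_distribs)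

lemma block_op_comp:
  assumes "blocks_bounded C L"
  shows "block_op B \<circ> block_op C = block_op (blocks_mult B C)"
proof (intro ext)
  fix x m
  show "(block_op B \<circ> block_op C) x m = block_op (blocks_mult B C) x m"
  proof (cases "x \<in> l2")
    case True
    have even: "block_op C x (2 * (m div 2)) = C (m div 2) 0 0 * x (2 * (m div 2)) + C (m div 2) 0 1 * x (2 * (m div 2) + 1)"
      and odd: "block_op C x (2 * (m div 2) + 1) = C (m div 2) 1 0 * x (2 * (m div 2)) + C (m div 2) 1 1 * x (2 * (m div 2) + 1)"
      using True by (simp_all add: block_op_def)
    show ?thesis
      using True block_op_l2[OF assms, of x]
      by (simp only: comp_def block_op_def if_True even odd blocks_mult_def) (simp add: ring_distribs)
  qed (simp add: block_op_def)
qed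

lemma l2inner_summable:
  assumes "u \<in> l2" "v \<in> l2"
  shows "summable (\<lambda>k. u k * cnj (v k))"
proof (rule summable_norm_cancel, rule summable_comparison_test')
  show "summable (\<lambda>k. (cmod (u k))\<^sup>2 + (cmod (v k))\<^sup>2)"
    using assms by (auto simp: l2_def intro!: summable_add)
  show "norm (norm (u k * cnj (v k))) \<le> (cmod (u k))\<^sup>2 + (cmod (v k))\<^sup>2" for k
  proof -
    have "cmod (u k) * cmod (v k) \<le> 2 * cmod (u k) * cmod (v k)"
      by simp
    also have "\<dots> \<le> (cmod (u k))\<^sup>2 + (cmod (v k))\<^sup>2"
      by (rule sum_squares_bound)
    finally show ?thesis
      by (simp add: norm_mult)
  qed
qed

lemma l2inner_pairs:
  assumes "u \<in> l2" "v \<in> l2"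
  shows "l2inner u v = (\<Sum>n. u (2 * n) * cnj (v (2 * n)) + u (2 * n + 1) * cnj (v (2 * n + 1)))"
proof -
  have "{n * 2..<n * 2 + 2} = {2 * n, 2 * n + 1}" for n :: nat
    by auto
  then have "(\<lambda>n. u (2 * n) * cnj (v (2 * n)) + u (2 * n + 1) * cnj (v (2 * n + 1))) sums l2inner u v"
    using sums_group[OF summable_sums[OF l2inner_summable[OF assms]], of 2]
    by (simp add: l2inner_def)
  then show ?thesis
    by (simp add: sums_unique)
qed

lemma l2inner_basis_vec: "l2inner (\<e> k) z = cnj (z k)"
proof -
  have "l2inner (\<e> k) z = (\<Sum>j\<in>{k}. \<e> k j * cnj (z j))"
    unfolding l2inner_def by (rule suminf_finite) (auto simp: basis_vec_def)
  then show ?thesis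
    by (simp add: basis_vec_def)
qed

lemma adj_eqI:
  assumes S_l2: "\<And>y. y \<in> l2 \<Longrightarrow> S y \<in> l2" and S_outside: "\<And>y. y \<notin> l2 \<Longrightarrow> S y = (\<lambda>k. 0)"
    and adjoint: "\<And>x y. x \<in> l2 \<Longrightarrow> y \<in> l2 \<Longrightarrow> l2inner (T x) y = l2inner x (S y)"
  shows "adj T = S"
proof
  fix y
  show "adj T y = S y"
  proof (cases "y \<in> l2")
    case y: True
    have "(THE z. z \<in> l2 \<and> (\<forall>x\<in>l2. l2inner (T x) y = l2inner x z)) = S y"
    proof (rule the_equality)
      fix z
      assume z: "z \<in> l2 \<and> (\<forall>x\<in>l2. l2inner (T x) y = l2inner x z)"
      then have "cnj (z k) = cnj (S y k)" for k
        using adjoint[OF basis_vec_l2 y, of k] by (simp add: l2inner_basis_vec)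
      then show "z = S y"
        by (simp add: fun_eq_iff)
    qed (use S_l2 adjoint y in blast)
    then show ?thesis
      using y by (simp add: adj_def)
  qed (simp add: adj_def S_outside)
qed

lemma block_op_adj:
  assumes B: "blocks_bounded B K"
  shows "adj (block_op B) = block_op (blocks_adj B)"
proof (rule adj_eqI)
  show "block_op (blocks_adj B) y \<in> l2" for y
    using block_op_l2[OF blocks_bounded_adj[OF B]] .
  show "block_op (blocks_adj B) y = (\<lambda>k. 0)" if "y \<notin> l2" for y
    using that by (simp add: block_op_def)
  fix x y
  assume x: "x \<in> l2" and y: "y \<in> l2"
  have d: "(2 * n) div 2 = n" "(2 * n) mod 2 = 0" "(2 * n + 1) div 2 = n" "(2 * n + 1) mod 2 = 1" for n :: nat
    by auto
  have "block_op B x (2 * n) * cnj (y (2 * n)) + block_op B x (2 * n + 1) * cnj (y (2 * n + 1))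
      = x (2 * n) * cnj (block_op (blocks_adj B) y (2 * n)) + x (2 * n + 1) * cnj (block_op (blocks_adj B) y (2 * n + 1))"
    for n
    using x y unfolding block_op_def blocks_adj_def d by (simp add: ring_distribs algebra_simps)
  then show "l2inner (block_op B x) y = l2inner x (block_op (blocks_adj B) y)"
    using block_op_l2[OF B] block_op_l2[OF blocks_bounded_adj[OF B]]
    by (simp add: l2inner_pairs x y)
qed

lemma projP_eq_block_op: "projP X = block_op (\<lambda>n i j. of_bool (n \<in> X \<and> i = j))"
proof (intro ext)
  fix x :: "nat \<Rightarrow> complex" and m :: nat
  show "projP X x m = block_op (\<lambda>n i j. of_bool (n \<in> X \<and> i = j)) x m"
  proof (cases "even m")
    case True
    then have "m mod 2 = 0" "2 * (m div 2) = m"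
      by simp_all
    then show ?thesis
      by (auto simp: projP_def block_op_def)
  next
    case False
    then have "m mod 2 = 1" "2 * (m div 2) + 1 = m"
      by (simp_all add: odd_iff_mod_2_eq_one)
    then show ?thesis
      by (auto simp: projP_def block_op_def)
  qed
qed

lemma compress_block_op:
  assumes "blocks_bounded B K"
  shows "projP X \<circ> block_op B \<circ> projP X = block_op (restrict_blocks X B)"
proof -
  have id: "blocks_bounded (\<lambda>n i j. of_bool (n \<in> X \<and> i = j)) 1"
    by (simp add: blocks_bounded_def)
  show ?thesis
    unfolding projP_eq_block_op block_op_comp[OF assms] block_op_comp[OF id]
  proof (rule block_op_cong)
    fix n i j :: nat
    assume "i < 2" "j < 2"
    then show "blocks_mult (blocks_mult (\<lambda>n i j. of_bool (n \<in> X \<and> i = j)) B) (\<lambda>n i j. of_bool (n \<in> X \<and> i = j)) n i j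
        = restrict_blocks X B n i j"
      by (cases rule: less_2_pair_cases) (simp_all add: blocks_mult_def restrict_blocks_def)
  qed
qed

lemma block_op_restrict_A0_on:
  assumes "blocks_bounded B K"
  shows "block_op (restrict_blocks X B) \<in> A0_on X"
  unfolding A0_on_def
  using block_op_A0[OF blocks_bounded_restrict[OF assms]]
  by (auto simp: block_op_basis_vec restrict_blocks_def fun_eq_iff)

section \<open>Compact block diagonal operators\<close>

lemma all_less_2: "(\<forall>i<2. P (i::nat)) \<longleftrightarrow> P 0 \<and> P 1"
  by (auto simp: less_Suc_eq numeral_2_eq_2)

lemma compact_op_block_entry_tendsto:
  assumes R: "compact_op R" "R \<in> A0" and ij: "i < 2" "j < 2"
  shows "(\<lambda>n. block_entry R n i j) \<longlonglongrightarrow> 0"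
  unfolding LIMSEQ_zero_iff_finite
proof (intro allI impI)
  fix e :: real
  assume e: "e > 0"
  show "finite {n. e \<le> cmod (block_entry R n i j)}"
  proof (rule ccontr)
    let ?S = "{n. e \<le> cmod (block_entry R n i j)}"
    assume "infinite ?S"
    obtain F where F: "finite F" "F \<subseteq> l2"
      "\<forall>x\<in>l2. l2norm x \<le> 1 \<longrightarrow> (\<exists>y\<in>F. l2norm (\<lambda>k. R x k - y k) < e / 2)"
      using R(1) e unfolding compact_op_def by (meson half_gt_zero)
    then have "\<exists>y\<in>F. l2norm (\<lambda>k. R (\<e> (2 * n + j)) k - y k) < e / 2" for n
      by simp
    then obtain g where g: "\<And>n. g n \<in> F" "\<And>n. l2norm (\<lambda>k. R (\<e> (2 * n + j)) k - g n k) < e / 2"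
      by metis
    \<comment> \<open>Two columns of \<open>R\<close> from different blocks cannot both be close to the same vector.\<close>
    have "\<not> inj_on g ?S"
    proof
      assume "inj_on g ?S"
      moreover have "finite (g ` ?S)"
        using F(1) g(1) by (meson finite_subset image_subsetI)
      ultimately show False
        using \<open>infinite ?S\<close> finite_imageD by blast
    qed
    then obtain a b where ab: "a \<in> ?S" "b \<in> ?S" "a \<noteq> b" "g a = g b"
      unfolding inj_on_def by blast
    have "(\<lambda>k. R (\<e> (2 * n + j)) k - g n k) \<in> l2" for n
      using l2_diff bounded_ops_l2[OF A0_bounded_ops[OF R(2)]] F(2) g(1) by blast
    then have close: "cmod (R (\<e> (2 * n + j)) (2 * a + i) - g n (2 * a + i)) < e / 2" for n
      using norm_le_l2norm g(2)[of n] by (blast intro: order.strict_trans1)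
    have "R (\<e> (2 * b + j)) (2 * a + i) = 0"
      using A0_entry_eq_0[OF R(2)] ab(3) ij by simp
    then have "cmod (g a (2 * a + i)) < e / 2"
      using close[of b] ab(4) by simp
    moreover have "e \<le> cmod (R (\<e> (2 * a + j)) (2 * a + i))"
      using ab(1) by (simp add: block_entry_def)
    ultimately show False
      using close[of a] norm_triangle_ineq2[of "R (\<e> (2 * a + j)) (2 * a + i)" "g a (2 * a + i)"] by linarith
  qed
qed

definition round_grid :: "real \<Rightarrow> complex \<Rightarrow> complex" where
  "round_grid \<eta> z = Complex (of_int \<lfloor>Re z / \<eta>\<rfloor> * \<eta>) (of_int \<lfloor>Im z / \<eta>\<rfloor> * \<eta>)"

lemma floor_divide_mult_bounds:
  assumes "\<eta> > 0"
  shows "of_int \<lfloor>t / \<eta>\<rfloor> * \<eta> \<le> t" and "t < of_int \<lfloor>t / \<eta>\<rfloor> * \<eta> + \<eta>"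
proof -
  have "of_int \<lfloor>t / \<eta>\<rfloor> \<le> t / \<eta>" "t / \<eta> < of_int \<lfloor>t / \<eta>\<rfloor> + 1"
    by linarith+
  then show "of_int \<lfloor>t / \<eta>\<rfloor> * \<eta> \<le> t" "t < of_int \<lfloor>t / \<eta>\<rfloor> * \<eta> + \<eta>"
    using assms by (simp_all add: le_divide_eq divide_less_eq algebra_simps)
qed

lemma round_grid_error:
  assumes "\<eta> > 0"
  shows "(cmod (z - round_grid \<eta> z))\<^sup>2 \<le> 2 * \<eta>\<^sup>2"
proof -
  have "\<bar>t - of_int \<lfloor>t / \<eta>\<rfloor> * \<eta>\<bar> \<le> \<bar>\<eta>\<bar>" for t
    using floor_divide_mult_bounds[OF assms, of t] assms by linarith
  then have sq: "(t - of_int \<lfloor>t / \<eta>\<rfloor> * \<eta>)\<^sup>2 \<le> \<eta>\<^sup>2" for t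
    by (simp only: abs_le_square_iff)
  show ?thesis
    using sq[of "Re z"] sq[of "Im z"] unfolding cmod_power2 by (simp add: round_grid_def)
qed

lemma floor_divide_bounded:
  assumes "\<eta> > 0" "\<bar>t\<bar> \<le> r" "r / \<eta> + 1 \<le> of_int L"
  shows "\<lfloor>t / \<eta>\<rfloor> \<in> {-L..L}"
proof -
  have "\<bar>t / \<eta>\<bar> \<le> r / \<eta>"
    using assms by (simp add: abs_divide divide_right_mono)
  then have "- of_int L \<le> t / \<eta>" "t / \<eta> < of_int L + 1"
    using assms(3) unfolding abs_le_iff by linarith+
  then show ?thesis
    by (simp add: le_floor_iff floor_le_iff)
qed

lemma round_grid_mem:
  assumes "\<eta> > 0" "cmod z \<le> r" "r / \<eta> + 1 \<le> of_int L"
  shows "round_grid \<eta> z \<in> (\<lambda>(a, b). Complex (of_int a * \<eta>) (of_int b * \<eta>)) ` ({-L..L} \<times> {-L..L})"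
proof -
  have "\<bar>Re z\<bar> \<le> r" "\<bar>Im z\<bar> \<le> r"
    using order_trans[OF abs_Re_le_cmod assms(2)] order_trans[OF abs_Im_le_cmod assms(2)] .
  then have "(\<lfloor>Re z / \<eta>\<rfloor>, \<lfloor>Im z / \<eta>\<rfloor>) \<in> {-L..L} \<times> {-L..L}"
    using floor_divide_bounded[OF assms(1) _ assms(3)] by blast
  then show ?thesis
    unfolding round_grid_def by (rule rev_image_eqI) simp
qed

lemma finite_support_finite_net:
  assumes "\<epsilon> > 0"
  obtains F where "finite F" "F \<subseteq> l2"
    "\<And>y. (\<And>m. M \<le> m \<Longrightarrow> y m = 0) \<Longrightarrow> (\<And>m. cmod (y m) \<le> r) \<Longrightarrow> \<exists>z\<in>F. l2norm (\<lambda>m. y m - z m) < \<epsilon>"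
proof
  define \<eta> where "\<eta> = \<epsilon> / (real M + 1)"
  have \<eta>: "\<eta> > 0"
    using assms by (simp add: \<eta>_def)
  define L :: int where "L = \<lceil>r / \<eta>\<rceil> + 1"
  have L: "r / \<eta> + 1 \<le> of_int L"
    unfolding L_def by linarith
  define grid where "grid = (\<lambda>(a, b). Complex (of_int a * \<eta>) (of_int b * \<eta>)) ` ({-L..L} \<times> {-L..L})"
  define F where "F = (\<lambda>l m. if m < M then l ! m else 0) ` {l. set l \<subseteq> grid \<and> length l = M}"
  show "finite F"
    unfolding F_def grid_def by (intro finite_imageI finite_lists_length_eq) auto
  show "F \<subseteq> l2"
    unfolding F_def by (auto intro!: l2_finite_support[of M])
  fix y
  assume supp: "\<And>m. M \<le> m \<Longrightarrow> y m = 0" and bound: "\<And>m. cmod (y m) \<le> r"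
  define z where "z m = (if m < M then round_grid \<eta> (y m) else 0)" for m
  have "round_grid \<eta> (y m) \<in> grid" for m
    unfolding grid_def by (rule round_grid_mem[OF \<eta> bound L])
  then have "map (\<lambda>m. round_grid \<eta> (y m)) [0..<M] \<in> {l. set l \<subseteq> grid \<and> length l = M}"
    by auto
  moreover have "z = (\<lambda>m. if m < M then map (\<lambda>m. round_grid \<eta> (y m)) [0..<M] ! m else 0)"
    by (auto simp: z_def fun_eq_iff)
  ultimately have "z \<in> F"
    unfolding F_def by blast
  have "(\<Sum>m. (cmod (y m - z m))\<^sup>2) = (\<Sum>m<M. (cmod (y m - round_grid \<eta> (y m)))\<^sup>2)"
    by (subst suminf_finite[of "{..<M}"]) (auto simp: z_def supp)
  also have "\<dots> \<le> (\<Sum>m<M. 2 * \<eta>\<^sup>2)"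
    by (intro sum_mono round_grid_error[OF \<eta>])
  also have "\<dots> = \<eta>\<^sup>2 * (2 * real M)"
    by simp
  also have "\<dots> < \<eta>\<^sup>2 * (real M + 1)\<^sup>2"
  proof (rule mult_strict_left_mono)
    show "2 * real M < (real M + 1)\<^sup>2"
      by (simp add: power2_sum) (use zero_le_power2[of "real M"] in linarith)
  qed (use \<eta> in simp)
  also have "\<dots> = \<epsilon>\<^sup>2"
    by (simp add: \<eta>_def power_divide)
  finally have "l2norm (\<lambda>m. y m - z m) < sqrt (\<epsilon>\<^sup>2)"
    unfolding l2norm_def by (rule real_sqrt_less_mono)
  then show "\<exists>z\<in>F. l2norm (\<lambda>m. y m - z m) < \<epsilon>"
    using \<open>z \<in> F\<close> assms by auto
qed

lemma compact_op_approx: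
  assumes T: "T \<in> bounded_ops"
    and approx: "\<And>\<epsilon>. \<epsilon> > 0 \<Longrightarrow> \<exists>S. compact_op S \<and> (\<forall>x\<in>l2. l2norm x \<le> 1 \<longrightarrow> l2norm (\<lambda>k. T x k - S x k) \<le> \<epsilon>)"
  shows "compact_op T"
  unfolding compact_op_def
proof (intro conjI allI impI T)
  fix \<epsilon> :: real
  assume "\<epsilon> > 0"
  then obtain S where S: "compact_op S" "\<And>x. x \<in> l2 \<Longrightarrow> l2norm x \<le> 1 \<Longrightarrow> l2norm (\<lambda>k. T x k - S x k) \<le> \<epsilon> / 2"
    using approx[of "\<epsilon> / 2"] by auto
  obtain F where F: "finite F" "F \<subseteq> l2" "\<And>x. x \<in> l2 \<Longrightarrow> l2norm x \<le> 1 \<Longrightarrow> \<exists>z\<in>F. l2norm (\<lambda>k. S x k - z k) < \<epsilon> / 2"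
    using S(1) \<open>\<epsilon> > 0\<close> unfolding compact_op_def by (meson half_gt_zero)
  have "\<exists>z\<in>F. l2norm (\<lambda>k. T x k - z k) < \<epsilon>" if x: "x \<in> l2" "l2norm x \<le> 1" for x
  proof -
    obtain z where z: "z \<in> F" "l2norm (\<lambda>k. S x k - z k) < \<epsilon> / 2"
      using F(3)[OF x] by blast
    have "T x \<in> l2" "S x \<in> l2" "z \<in> l2"
      using T S(1) z(1) F(2) bounded_ops_l2 unfolding compact_op_def by blast+
    then have "l2norm (\<lambda>k. (T x k - S x k) + (S x k - z k)) \<le> l2norm (\<lambda>k. T x k - S x k) + l2norm (\<lambda>k. S x k - z k)"
      by (intro l2norm_triangle l2_diff)
    then have "l2norm (\<lambda>k. T x k - z k) \<le> l2norm (\<lambda>k. T x k - S x k) + l2norm (\<lambda>k. S x k - z k)"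
      by simp
    then show ?thesis
      using S(2)[OF x] z by (intro bexI[OF _ z(1)]) linarith
  qed
  then show "\<exists>F. finite F \<and> F \<subseteq> l2 \<and> (\<forall>x\<in>l2. l2norm x \<le> 1 \<longrightarrow> (\<exists>y\<in>F. l2norm (\<lambda>k. T x k - y k) < \<epsilon>))"
    using F(1,2) by blast
qed

lemma compact_block_op_finite_support:
  assumes B: "blocks_bounded B K" and supp: "\<And>n i j. N \<le> n \<Longrightarrow> B n i j = 0"
  shows "compact_op (block_op B)"
  unfolding compact_op_def
proof (intro conjI allI impI block_op_bounded[OF B])
  fix \<epsilon> :: real
  assume "\<epsilon> > 0"
  then obtain F where F: "finite F" "F \<subseteq> l2"
    "\<And>y. (\<And>m. 2 * N \<le> m \<Longrightarrow> y m = 0) \<Longrightarrow> (\<And>m. cmod (y m) \<le> 2 * K) \<Longrightarrow> \<exists>z\<in>F. l2norm (\<lambda>m. y m - z m) < \<epsilon>"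
    by (rule finite_support_finite_net[where M = "2 * N" and r = "2 * K"]) blast
  have "\<exists>z\<in>F. l2norm (\<lambda>k. block_op B x k - z k) < \<epsilon>" if x: "x \<in> l2" "l2norm x \<le> 1" for x
  proof (rule F(3))
    show "cmod (block_op B x m) \<le> 2 * K" for m
      using order_trans[OF norm_le_l2norm[OF block_op_l2[OF B]] l2norm_block_op_le[OF B x]] .
    show "block_op B x m = 0" if "2 * N \<le> m" for m
      using supp[of "m div 2"] that by (simp add: block_op_def)
  qed
  then show "\<exists>F. finite F \<and> F \<subseteq> l2 \<and> (\<forall>x\<in>l2. l2norm x \<le> 1 \<longrightarrow> (\<exists>y\<in>F. l2norm (\<lambda>k. block_op B x k - y k) < \<epsilon>))"
    using F(1,2) by blast
qed

lemma blocks_eventually_small: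
  fixes B :: blocks
  assumes "\<And>i j. i < 2 \<Longrightarrow> j < 2 \<Longrightarrow> (\<lambda>n. B n i j) \<longlonglongrightarrow> 0" and "d > 0"
  shows "\<exists>N. \<forall>n\<ge>N. \<forall>i<2. \<forall>j<2. cmod (B n i j) < d"
proof -
  have "\<forall>\<^sub>F n in sequentially. cmod (B n i j) < d" if "i < 2" "j < 2" for i j
    using tendsto_iff[THEN iffD1, OF assms(1)[OF that], rule_format, OF assms(2)] by simp
  then have "\<forall>\<^sub>F n in sequentially. \<forall>i<2. \<forall>j<2. cmod (B n i j) < d"
    unfolding all_less_2 by (simp add: eventually_conj_iff)
  then show ?thesis
    unfolding eventually_sequentially .
qed

lemma compact_block_op:
  assumes B: "blocks_bounded B K" and lim: "\<And>i j. i < 2 \<Longrightarrow> j < 2 \<Longrightarrow> (\<lambda>n. B n i j) \<longlonglongrightarrow> 0"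
  shows "compact_op (block_op B)"
proof (rule compact_op_approx[OF block_op_bounded[OF B]])
  fix \<epsilon> :: real
  assume "\<epsilon> > 0"
  then have "\<epsilon> / 2 > 0"
    by simp
  then obtain N where N: "\<forall>n\<ge>N. \<forall>i<2. \<forall>j<2. cmod (B n i j) < \<epsilon> / 2"
    using blocks_eventually_small[of B, OF lim] by blast
  define head where "head = (\<lambda>n i j. if n < N then B n i j else 0)"
  define tail where "tail = (\<lambda>n i j. if n < N then 0 else B n i j)"
  have "blocks_bounded head K"
    using B blocks_bounded_nonneg[OF B] by (simp add: blocks_bounded_def head_def)
  then have "compact_op (block_op head)"
    by (rule compact_block_op_finite_support[where N = N]) (simp add: head_def)
  moreover have "blocks_bounded tail (\<epsilon> / 2)"
    using N \<open>\<epsilon> > 0\<close> by (auto simp: blocks_bounded_def tail_def less_imp_le)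
  then have "l2norm (\<lambda>k. block_op B x k - block_op head x k) \<le> \<epsilon>" if "x \<in> l2" "l2norm x \<le> 1" for x
  proof -
    have "block_op B x k - block_op head x k = block_op tail x k" for k
      by (simp add: block_op_def head_def tail_def)
    then show ?thesis
      using l2norm_block_op_le[OF \<open>blocks_bounded tail (\<epsilon> / 2)\<close> that] by simp
  qed
  ultimately show "\<exists>S. compact_op S \<and> (\<forall>x\<in>l2. l2norm x \<le> 1 \<longrightarrow> l2norm (\<lambda>k. block_op B x k - S x k) \<le> \<epsilon>)"
    by blast
qed

section \<open>Coordinates in the basis \<open>f\<^sub>\<alpha>\<close>\<close>

text \<open>\<^term>\<open>fcoef \<alpha> q i\<close> is the \<open>e\<^sub>2\<^sub>n\<^sub>+\<^sub>i\<close>-coordinate of \<open>f\<^sub>\<alpha>\<^sub>,\<^sub>2\<^sub>n\<^sub>+\<^sub>q\<close>; this \<open>2 \<times> 2\<close> matrix is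
  symmetric and, for \<open>\<bar>\<alpha>\<bar> \<le> 1\<close>, orthogonal, so \<^term>\<open>fblock \<alpha> B n\<close> is the matrix of \<^term>\<open>B n\<close> in the
  basis \<open>f\<^sub>\<alpha>\<^sub>,\<^sub>2\<^sub>n, f\<^sub>\<alpha>\<^sub>,\<^sub>2\<^sub>n\<^sub>+\<^sub>1\<close>.\<close>

definition fcoef :: "real \<Rightarrow> nat \<Rightarrow> nat \<Rightarrow> complex" where
  "fcoef \<alpha> q i = of_real (if q = 0 then (if i = 0 then \<alpha> else sqrt (1 - \<alpha>\<^sup>2))
                         else (if i = 0 then sqrt (1 - \<alpha>\<^sup>2) else - \<alpha>))"

definition fblock :: "real \<Rightarrow> blocks \<Rightarrow> blocks" where
  "fblock \<alpha> B n p q = (\<Sum>i<2. \<Sum>j<2. fcoef \<alpha> p i * B n i j * fcoef \<alpha> q j)"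

definition asymp_fdiagonal :: "real \<Rightarrow> nat set \<Rightarrow> blocks \<Rightarrow> bool" where
  "asymp_fdiagonal \<alpha> X B \<longleftrightarrow>
     ((\<lambda>n. fblock \<alpha> B n 1 0) \<longlongrightarrow> 0) (sequentially \<sqinter> principal X) \<and>
     ((\<lambda>n. fblock \<alpha> B n 0 1) \<longlongrightarrow> 0) (sequentially \<sqinter> principal X)"

lemma norm_fcoef_le:
  assumes "\<bar>\<alpha>\<bar> \<le> 1"
  shows "cmod (fcoef \<alpha> q i) \<le> 1"
proof -
  have "0 \<le> 1 - \<alpha>\<^sup>2" "1 - \<alpha>\<^sup>2 \<le> 1"
    using assms by (simp_all add: abs_square_le_1)
  then show ?thesis
    using assms by (auto simp: fcoef_def norm_of_real)
qed

lemma fcoef_orthonormal: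
  assumes "\<bar>\<alpha>\<bar> \<le> 1"
  shows "fcoef \<alpha> 0 0 * fcoef \<alpha> 0 0 + fcoef \<alpha> 0 1 * fcoef \<alpha> 0 1 = 1"
    and "fcoef \<alpha> 1 0 * fcoef \<alpha> 1 0 + fcoef \<alpha> 1 1 * fcoef \<alpha> 1 1 = 1"
    and "fcoef \<alpha> 0 0 * fcoef \<alpha> 1 0 + fcoef \<alpha> 0 1 * fcoef \<alpha> 1 1 = 0"
    and "fcoef \<alpha> 0 1 = fcoef \<alpha> 1 0"
proof -
  have "\<alpha> * \<alpha> \<le> 1"
    using assms abs_square_le_1[of \<alpha>] by (simp add: power2_eq_square)
  then show "fcoef \<alpha> 0 0 * fcoef \<alpha> 0 0 + fcoef \<alpha> 0 1 * fcoef \<alpha> 0 1 = 1"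
    and "fcoef \<alpha> 1 0 * fcoef \<alpha> 1 0 + fcoef \<alpha> 1 1 * fcoef \<alpha> 1 1 = 1"
    and "fcoef \<alpha> 0 0 * fcoef \<alpha> 1 0 + fcoef \<alpha> 0 1 * fcoef \<alpha> 1 1 = 0"
    and "fcoef \<alpha> 0 1 = fcoef \<alpha> 1 0"
    by (simp_all add: fcoef_def power2_eq_square flip: of_real_mult of_real_add)
qed

lemma cnj_fcoef [simp]: "cnj (fcoef \<alpha> q i) = fcoef \<alpha> q i"
  by (simp add: fcoef_def)

lemma fblock_expand:
  "fblock \<alpha> B n p q =
     fcoef \<alpha> p 0 * B n 0 0 * fcoef \<alpha> q 0 + fcoef \<alpha> p 0 * B n 0 1 * fcoef \<alpha> q 1
   + fcoef \<alpha> p 1 * B n 1 0 * fcoef \<alpha> q 0 + fcoef \<alpha> p 1 * B n 1 1 * fcoef \<alpha> q 1"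
  by (simp add: fblock_def numeral_2_eq_2)

lemma fblock_cong:
  "(\<And>i j. i < 2 \<Longrightarrow> j < 2 \<Longrightarrow> B n i j = C n i j) \<Longrightarrow> fblock \<alpha> B n p q = fblock \<alpha> C n p q"
  unfolding fblock_expand by simp

lemma fblock_add: "fblock \<alpha> (\<lambda>n i j. B n i j + C n i j) n p q = fblock \<alpha> B n p q + fblock \<alpha> C n p q"
  unfolding fblock_expand by (simp add: algebra_simps)

lemma fblock_diff: "fblock \<alpha> (\<lambda>n i j. B n i j - C n i j) n p q = fblock \<alpha> B n p q - fblock \<alpha> C n p q"
  unfolding fblock_expand by (simp add: algebra_simps)

lemma fblock_scale: "fblock \<alpha> (\<lambda>n i j. c * B n i j) n p q = c * fblock \<alpha> B n p q"
  unfolding fblock_expand by (simp add: algebra_simps)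

lemma fblock_adj: "fblock \<alpha> (blocks_adj B) n p q = cnj (fblock \<alpha> B n q p)"
  unfolding fblock_expand blocks_adj_def by (simp add: algebra_simps)

lemma fblock_mult:
  assumes "\<bar>\<alpha>\<bar> \<le> 1"
  shows "fblock \<alpha> (blocks_mult B C) n p q = fblock \<alpha> B n p 0 * fblock \<alpha> C n 0 q + fblock \<alpha> B n p 1 * fblock \<alpha> C n 1 q"
  using fcoef_orthonormal[OF assms] unfolding fblock_expand blocks_mult_def by algebra

text \<open>The change of basis fixes the identity, so it maps \<open>x I + y A\<close> to \<open>x I + y (fblock A)\<close>.\<close>

lemma fblock_offdiag_affine:
  assumes "\<bar>\<alpha>\<bar> \<le> 1" and C: "\<And>i j. C n i j = x * of_bool (i = j) + y * A n i j"
  shows "fblock \<alpha> C n 1 0 = y * fblock \<alpha> A n 1 0" "fblock \<alpha> C n 0 1 = y * fblock \<alpha> A n 0 1"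
proof -
  have "C n 0 0 = x + y * A n 0 0" "C n 0 1 = y * A n 0 1" "C n 1 0 = y * A n 1 0" "C n 1 1 = x + y * A n 1 1"
    by (simp_all add: C)
  then show "fblock \<alpha> C n 1 0 = y * fblock \<alpha> A n 1 0" "fblock \<alpha> C n 0 1 = y * fblock \<alpha> A n 0 1"
    using fcoef_orthonormal[OF assms(1)] unfolding fblock_expand by algebra+
qed

lemma fblock_norm_le:
  assumes "\<bar>\<alpha>\<bar> \<le> 1" "blocks_bounded B K"
  shows "cmod (fblock \<alpha> B n p q) \<le> 4 * K"
proof -
  have summand: "cmod (fcoef \<alpha> p i * B n i j * fcoef \<alpha> q j) \<le> K" if "i < 2" "j < 2" for i j
  proof -
    have "cmod (fcoef \<alpha> p i * B n i j * fcoef \<alpha> q j) = cmod (fcoef \<alpha> p i) * cmod (B n i j) * cmod (fcoef \<alpha> q j)"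
      by (simp add: norm_mult)
    also have "\<dots> \<le> 1 * K * 1"
      using norm_fcoef_le[OF assms(1)] blocks_boundedD[OF assms(2) that] blocks_bounded_nonneg[OF assms(2)]
      by (intro mult_mono) auto
    finally show ?thesis
      by simp
  qed
  have add4: "cmod (a + b + c + d) \<le> cmod a + cmod b + cmod c + cmod d" for a b c d :: complex
    using norm_triangle_ineq[of "a + b + c" d] norm_triangle_ineq[of "a + b" c] norm_triangle_ineq[of a b]
    by linarith
  show ?thesis
    unfolding fblock_expand
    by (rule order_trans[OF add4]) (use summand[of 0 0] summand[of 0 1] summand[of 1 0] summand[of 1 1] in simp)
qed

lemma fblock_tendsto_zero:
  assumes "\<And>i j. i < 2 \<Longrightarrow> j < 2 \<Longrightarrow> ((\<lambda>n. B n i j) \<longlongrightarrow> 0) F"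
  shows "((\<lambda>n. fblock \<alpha> B n p q) \<longlongrightarrow> 0) F"
  unfolding fblock_expand
  using assms[of 0 0] assms[of 0 1] assms[of 1 0] assms[of 1 1]
  by (auto intro!: tendsto_add_zero tendsto_mult_left_zero tendsto_mult_right_zero)

lemma fvec_coord:
  assumes "q < 2"
  shows "fvec \<alpha> (2 * n + q) m = (if m div 2 = n then fcoef \<alpha> q (m mod 2) else 0)"
proof -
  have f: "fvec \<alpha> (2 * n + q) m = (if q = 0
      then of_real \<alpha> * \<e> (2 * n) m + of_real (sqrt (1 - \<alpha>\<^sup>2)) * \<e> (2 * n + 1) m
      else of_real (sqrt (1 - \<alpha>\<^sup>2)) * \<e> (2 * n) m - of_real \<alpha> * \<e> (2 * n + 1) m)"
    using less_2_cases[OF assms] by (auto simp: fvec_def)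
  consider "m = 2 * n" | "m = 2 * n + 1" | "m \<noteq> 2 * n" "m \<noteq> 2 * n + 1" "m div 2 \<noteq> n"
    by linarith
  then show ?thesis
  proof cases
    case 1
    then show ?thesis
      using f less_2_cases[OF assms] by (auto simp: basis_vec_def fcoef_def)
  next
    case 2
    then show ?thesis
      using f less_2_cases[OF assms] by (auto simp: basis_vec_def fcoef_def)
  next
    case 3
    then show ?thesis
      using f by (simp add: basis_vec_def)
  qed
qed

lemma fvec_l2: "fvec \<alpha> k \<in> l2"
  by (rule l2_finite_support[of "k + 2"]) (auto simp: fvec_def basis_vec_def)

lemma block_op_fvec:
  assumes "q < 2"
  shows "block_op C (fvec \<alpha> (2 * n + q)) m = (if m div 2 = n
    then C n (m mod 2) 0 * fcoef \<alpha> q 0 + C n (m mod 2) 1 * fcoef \<alpha> q 1 else 0)"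
  using fvec_l2 by (simp add: block_op_def fvec_coord[OF assms])

section \<open>Compressions in \<open>\<D>\<^sub>\<K>(X, \<alpha>)\<close>\<close>

definition fdiag_part :: "real \<Rightarrow> blocks \<Rightarrow> blocks" where
  "fdiag_part \<alpha> B = (\<lambda>n i j.
     fcoef \<alpha> 0 i * fblock \<alpha> B n 0 0 * fcoef \<alpha> 0 j +
     fcoef \<alpha> 1 i * fblock \<alpha> B n 1 1 * fcoef \<alpha> 1 j)"

definition foffdiag_part :: "real \<Rightarrow> blocks \<Rightarrow> blocks" where
  "foffdiag_part \<alpha> B = (\<lambda>n i j.
     fcoef \<alpha> 1 i * fblock \<alpha> B n 1 0 * fcoef \<alpha> 0 j +
     fcoef \<alpha> 0 i * fblock \<alpha> B n 0 1 * fcoef \<alpha> 1 j)"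

lemma fdiag_plus_foffdiag:
  assumes "\<bar>\<alpha>\<bar> \<le> 1" "i < 2" "j < 2"
  shows "B n i j = fdiag_part \<alpha> B n i j + foffdiag_part \<alpha> B n i j"
proof -
  have eqs: "B n 0 0 = fdiag_part \<alpha> B n 0 0 + foffdiag_part \<alpha> B n 0 0"
    "B n 0 1 = fdiag_part \<alpha> B n 0 1 + foffdiag_part \<alpha> B n 0 1"
    "B n 1 0 = fdiag_part \<alpha> B n 1 0 + foffdiag_part \<alpha> B n 1 0"
    "B n 1 1 = fdiag_part \<alpha> B n 1 1 + foffdiag_part \<alpha> B n 1 1"
    using fcoef_orthonormal[OF assms(1)] unfolding fdiag_part_def foffdiag_part_def fblock_expand
    by algebra+
  show ?thesis
    using assms(2,3) by (cases rule: less_2_pair_cases) (use eqs in simp_all)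
qed

lemma norm_fcoef_mult_le:
  assumes "\<bar>\<alpha>\<bar> \<le> 1"
  shows "cmod (fcoef \<alpha> p i * z * fcoef \<alpha> q j) \<le> cmod z"
proof -
  have "cmod (fcoef \<alpha> p i * z * fcoef \<alpha> q j) = cmod (fcoef \<alpha> p i) * cmod z * cmod (fcoef \<alpha> q j)"
    by (simp add: norm_mult)
  also have "\<dots> \<le> 1 * cmod z * 1"
    using norm_fcoef_le[OF assms] by (intro mult_mono) auto
  finally show ?thesis
    by simp
qed

lemma norm_fcoef_fblock_le:
  assumes "\<bar>\<alpha>\<bar> \<le> 1" "blocks_bounded B K"
  shows "cmod (fcoef \<alpha> p i * fblock \<alpha> B n r s * fcoef \<alpha> q j) \<le> 4 * K"
  by (rule order_trans[OF norm_fcoef_mult_le[OF assms(1)] fblock_norm_le[OF assms]])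

lemma blocks_bounded_fdiag_part:
  assumes "\<bar>\<alpha>\<bar> \<le> 1" "blocks_bounded B K"
  shows "blocks_bounded (fdiag_part \<alpha> B) (8 * K)"
  unfolding blocks_bounded_def fdiag_part_def
  using norm_triangle_le[OF add_mono[OF norm_fcoef_fblock_le[OF assms] norm_fcoef_fblock_le[OF assms]]]
  by simp

lemma blocks_bounded_foffdiag_part:
  assumes "\<bar>\<alpha>\<bar> \<le> 1" "blocks_bounded B K"
  shows "blocks_bounded (foffdiag_part \<alpha> B) (8 * K)"
  unfolding blocks_bounded_def foffdiag_part_def
  using norm_triangle_le[OF add_mono[OF norm_fcoef_fblock_le[OF assms] norm_fcoef_fblock_le[OF assms]]]
  by simp

lemma foffdiag_part_tendsto:
  assumes "asymp_fdiagonal \<alpha> X B"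
  shows "((\<lambda>n. foffdiag_part \<alpha> B n i j) \<longlongrightarrow> 0) (sequentially \<sqinter> principal X)"
  using assms unfolding asymp_fdiagonal_def foffdiag_part_def
  by (auto intro!: tendsto_add_zero tendsto_mult_left_zero tendsto_mult_right_zero)

lemma fblock_offdiag_eq_0_if_eigen:
  assumes "\<bar>\<alpha>\<bar> \<le> 1"
  shows "(\<And>i. i < 2 \<Longrightarrow> C n i 0 * fcoef \<alpha> 0 0 + C n i 1 * fcoef \<alpha> 0 1 = c * fcoef \<alpha> 0 i) \<Longrightarrow> fblock \<alpha> C n 1 0 = 0"
    and "(\<And>i. i < 2 \<Longrightarrow> C n i 0 * fcoef \<alpha> 1 0 + C n i 1 * fcoef \<alpha> 1 1 = c * fcoef \<alpha> 1 i) \<Longrightarrow> fblock \<alpha> C n 0 1 = 0"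
proof -
  show "fblock \<alpha> C n 1 0 = 0"
    if "\<And>i. i < 2 \<Longrightarrow> C n i 0 * fcoef \<alpha> 0 0 + C n i 1 * fcoef \<alpha> 0 1 = c * fcoef \<alpha> 0 i"
  proof -
    have "C n 0 0 * fcoef \<alpha> 0 0 + C n 0 1 * fcoef \<alpha> 0 1 = c * fcoef \<alpha> 0 0"
      and "C n 1 0 * fcoef \<alpha> 0 0 + C n 1 1 * fcoef \<alpha> 0 1 = c * fcoef \<alpha> 0 1"
      using that[of 0] that[of 1] by simp_all
    then show ?thesis
      using fcoef_orthonormal[OF assms] unfolding fblock_expand by algebra
  qed
  show "fblock \<alpha> C n 0 1 = 0"
    if "\<And>i. i < 2 \<Longrightarrow> C n i 0 * fcoef \<alpha> 1 0 + C n i 1 * fcoef \<alpha> 1 1 = c * fcoef \<alpha> 1 i"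
  proof -
    have "C n 0 0 * fcoef \<alpha> 1 0 + C n 0 1 * fcoef \<alpha> 1 1 = c * fcoef \<alpha> 1 0"
      and "C n 1 0 * fcoef \<alpha> 1 0 + C n 1 1 * fcoef \<alpha> 1 1 = c * fcoef \<alpha> 1 1"
      using that[of 0] that[of 1] by simp_all
    then show ?thesis
      using fcoef_orthonormal[OF assms] unfolding fblock_expand by algebra
  qed
qed

lemma fdiag_part_eigen:
  assumes "\<bar>\<alpha>\<bar> \<le> 1"
  shows "fdiag_part \<alpha> B n i 0 * fcoef \<alpha> 0 0 + fdiag_part \<alpha> B n i 1 * fcoef \<alpha> 0 1 = fblock \<alpha> B n 0 0 * fcoef \<alpha> 0 i"
    and "fdiag_part \<alpha> B n i 0 * fcoef \<alpha> 1 0 + fdiag_part \<alpha> B n i 1 * fcoef \<alpha> 1 1 = fblock \<alpha> B n 1 1 * fcoef \<alpha> 1 i"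
  using fcoef_orthonormal[OF assms] unfolding fdiag_part_def by algebra+

lemma block_op_fvec_eigen:
  assumes "q < 2" and eigen: "\<And>i. i < 2 \<Longrightarrow> C n i 0 * fcoef \<alpha> q 0 + C n i 1 * fcoef \<alpha> q 1 = c * fcoef \<alpha> q i"
  shows "block_op C (fvec \<alpha> (2 * n + q)) = (\<lambda>m. c * fvec \<alpha> (2 * n + q) m)"
  using eigen[of "_ mod 2"] by (auto simp: block_op_fvec[OF assms(1)] fvec_coord[OF assms(1)] fun_eq_iff)

lemma Dset_fblock_offdiag_eq_0:
  assumes S: "S \<in> Dset X \<alpha>" and n: "n \<in> X" and \<alpha>: "\<bar>\<alpha>\<bar> \<le> 1"
  shows "fblock \<alpha> (block_entry S) n 1 0 = 0" "fblock \<alpha> (block_entry S) n 0 1 = 0"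
proof -
  have SA: "S \<in> A0"
    using S by (simp add: Dset_def A0_on_def)
  obtain c d where c: "S (fvec \<alpha> (2 * n + 0)) = (\<lambda>m. c * fvec \<alpha> (2 * n + 0) m)"
    and d: "S (fvec \<alpha> (2 * n + 1)) = (\<lambda>m. d * fvec \<alpha> (2 * n + 1) m)"
    using S n unfolding Dset_def by auto
  have eigen: "block_entry S n i 0 * fcoef \<alpha> q 0 + block_entry S n i 1 * fcoef \<alpha> q 1 = e * fcoef \<alpha> q i"
    if "q < 2" "i < 2" "S (fvec \<alpha> (2 * n + q)) = (\<lambda>m. e * fvec \<alpha> (2 * n + q) m)" for q i e
  proof -
    have "block_op (block_entry S) (fvec \<alpha> (2 * n + q)) (2 * n + i) = e * fvec \<alpha> (2 * n + q) (2 * n + i)"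
      using that(3) by (simp add: A0_eq_block_op[OF SA, symmetric])
    then show ?thesis
      using that(1,2) by (simp add: block_op_fvec fvec_coord)
  qed
  show "fblock \<alpha> (block_entry S) n 1 0 = 0"
    by (rule fblock_offdiag_eq_0_if_eigen(1)[OF \<alpha>]) (rule eigen[OF _ _ c], simp_all)
  show "fblock \<alpha> (block_entry S) n 0 1 = 0"
    by (rule fblock_offdiag_eq_0_if_eigen(2)[OF \<alpha>]) (rule eigen[OF _ _ d], simp_all)
qed

lemma DKset_imp_asymp_fdiagonal:
  assumes "block_op (restrict_blocks X B) \<in> DKset X \<alpha>" and \<alpha>: "\<bar>\<alpha>\<bar> \<le> 1"
  shows "asymp_fdiagonal \<alpha> X B"
proof -
  obtain S R where eq: "block_op (restrict_blocks X B) = op_add S R" and S: "S \<in> Dset X \<alpha>"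
    and R: "compact_op R" "R \<in> A0_on X"
    using assms(1) unfolding DKset_def by blast
  have RA: "R \<in> A0"
    using R(2) by (simp add: A0_on_def)
  have entries: "B n i j = block_entry S n i j + block_entry R n i j" if "n \<in> X" "i < 2" "j < 2" for n i j
    using arg_cong[OF eq, of "\<lambda>T. block_entry T n i j"] that
    by (simp add: block_entry_block_op restrict_blocks_def) (simp add: block_entry_def op_add_def)
  have zero: "fblock \<alpha> (block_entry S) n p q = 0" if "n \<in> X" "(p, q) \<in> {(1, 0), (0, 1)}" for n p q
    using Dset_fblock_offdiag_eq_0[OF S that(1) \<alpha>] that(2) by auto
  have "((\<lambda>n. fblock \<alpha> B n p q) \<longlongrightarrow> 0) (sequentially \<sqinter> principal X)" if pq: "(p, q) \<in> {(1, 0), (0, 1)}" for p q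
  proof -
    have "((\<lambda>n. fblock \<alpha> (block_entry R) n p q) \<longlongrightarrow> 0) sequentially"
      by (intro fblock_tendsto_zero compact_op_block_entry_tendsto R(1) RA)
    then have "((\<lambda>n. fblock \<alpha> (block_entry R) n p q) \<longlongrightarrow> 0) (sequentially \<sqinter> principal X)"
      by (rule tendsto_mono[rotated]) simp
    moreover have "\<forall>\<^sub>F n in sequentially \<sqinter> principal X. fblock \<alpha> B n p q = fblock \<alpha> (block_entry R) n p q"
    proof (rule eventually_inf_principal[THEN iffD2, OF always_eventually], intro allI impI)
      fix n
      assume "n \<in> X"
      then have "fblock \<alpha> B n p q = fblock \<alpha> (block_entry S) n p q + fblock \<alpha> (block_entry R) n p q"
        using entries fblock_add[symmetric] by (metis (no_types, lifting) fblock_cong)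
      then show "fblock \<alpha> B n p q = fblock \<alpha> (block_entry R) n p q"
        using zero[OF \<open>n \<in> X\<close> pq] by simp
    qed
    ultimately show ?thesis
      by (simp add: tendsto_cong)
  qed
  from this[of 1 0] this[of 0 1] show ?thesis
    by (simp add: asymp_fdiagonal_def)
qed

lemma asymp_fdiagonal_imp_DKset:
  assumes B: "blocks_bounded B K" and \<alpha>: "\<bar>\<alpha>\<bar> \<le> 1" and fdiag: "asymp_fdiagonal \<alpha> X B"
  shows "block_op (restrict_blocks X B) \<in> DKset X \<alpha>"
proof -
  define S where "S = block_op (restrict_blocks X (fdiag_part \<alpha> B))"
  define R where "R = block_op (restrict_blocks X (foffdiag_part \<alpha> B))"
  have D: "blocks_bounded (fdiag_part \<alpha> B) (8 * K)" and O: "blocks_bounded (foffdiag_part \<alpha> B) (8 * K)"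
    using blocks_bounded_fdiag_part[OF \<alpha> B] blocks_bounded_foffdiag_part[OF \<alpha> B] .
  have "block_op (restrict_blocks X B) = op_add S R"
    unfolding S_def R_def op_add_block_op
    by (rule block_op_cong) (simp add: restrict_blocks_def fdiag_plus_foffdiag[OF \<alpha>, symmetric])
  moreover have "S \<in> Dset X \<alpha>"
    unfolding Dset_def
  proof (intro CollectI conjI ballI)
    show "S \<in> A0_on X"
      unfolding S_def by (rule block_op_restrict_A0_on[OF D])
    fix n
    assume "n \<in> X"
    then have "S (fvec \<alpha> (2 * n + 0)) = (\<lambda>m. fblock \<alpha> B n 0 0 * fvec \<alpha> (2 * n + 0) m)"
      and "S (fvec \<alpha> (2 * n + 1)) = (\<lambda>m. fblock \<alpha> B n 1 1 * fvec \<alpha> (2 * n + 1) m)"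
      unfolding S_def using fdiag_part_eigen[OF \<alpha>]
      by (intro block_op_fvec_eigen; simp add: restrict_blocks_def)+
    then show "\<exists>c d. S (fvec \<alpha> (2 * n)) = (\<lambda>m. c * fvec \<alpha> (2 * n) m) \<and> S (fvec \<alpha> (2 * n + 1)) = (\<lambda>m. d * fvec \<alpha> (2 * n + 1) m)"
      by auto
  qed
  moreover have "compact_op R"
    unfolding R_def restrict_blocks_def
    by (intro compact_block_op[OF blocks_bounded_restrict[OF O, unfolded restrict_blocks_def]]
        tendsto_zero_restrict foffdiag_part_tendsto fdiag)
  moreover have "R \<in> A0_on X"
    unfolding R_def by (rule block_op_restrict_A0_on[OF O])
  ultimately show ?thesis
    unfolding DKset_def by blast
qed

section \<open>The algebra \<open>\<M>\<^sub>\<X>\<^sub>,\<^sub>\<AA>\<close>\<close>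

lemma asymp_fdiagonal_cong:
  assumes "\<And>n i j. i < 2 \<Longrightarrow> j < 2 \<Longrightarrow> B n i j = C n i j"
  shows "asymp_fdiagonal \<alpha> X B \<longleftrightarrow> asymp_fdiagonal \<alpha> X C"
proof -
  have "fblock \<alpha> B n p q = fblock \<alpha> C n p q" for n p q
    by (rule fblock_cong) (rule assms)
  then show ?thesis
    by (simp add: asymp_fdiagonal_def)
qed

lemma asymp_fdiagonal_add:
  "asymp_fdiagonal \<alpha> X B \<Longrightarrow> asymp_fdiagonal \<alpha> X C \<Longrightarrow> asymp_fdiagonal \<alpha> X (\<lambda>n i j. B n i j + C n i j)"
  unfolding asymp_fdiagonal_def fblock_add by (auto intro: tendsto_add_zero)

lemma asymp_fdiagonal_diff:
  "asymp_fdiagonal \<alpha> X B \<Longrightarrow> asymp_fdiagonal \<alpha> X C \<Longrightarrow> asymp_fdiagonal \<alpha> X (\<lambda>n i j. B n i j - C n i j)"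
  unfolding asymp_fdiagonal_def fblock_diff by (auto intro: tendsto_diff[where a = 0 and b = 0, simplified])

lemma asymp_fdiagonal_scale: "asymp_fdiagonal \<alpha> X B \<Longrightarrow> asymp_fdiagonal \<alpha> X (\<lambda>n i j. c * B n i j)"
  unfolding asymp_fdiagonal_def fblock_scale by (auto intro: tendsto_mult_right_zero)

lemma asymp_fdiagonal_adj: "asymp_fdiagonal \<alpha> X B \<Longrightarrow> asymp_fdiagonal \<alpha> X (blocks_adj B)"
  unfolding asymp_fdiagonal_def fblock_adj by (auto dest: tendsto_cnj)

lemma asymp_fdiagonal_mult:
  assumes \<alpha>: "\<bar>\<alpha>\<bar> \<le> 1" and B: "blocks_bounded B K" "asymp_fdiagonal \<alpha> X B"
    and C: "blocks_bounded C L" "asymp_fdiagonal \<alpha> X C"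
  shows "asymp_fdiagonal \<alpha> X (blocks_mult B C)"
proof -
  note bB = fblock_norm_le[OF \<alpha> B(1)] and bC = fblock_norm_le[OF \<alpha> C(1)]
  have B10: "((\<lambda>n. fblock \<alpha> B n 1 0) \<longlongrightarrow> 0) (sequentially \<sqinter> principal X)"
    and B01: "((\<lambda>n. fblock \<alpha> B n 0 1) \<longlongrightarrow> 0) (sequentially \<sqinter> principal X)"
    and C10: "((\<lambda>n. fblock \<alpha> C n 1 0) \<longlongrightarrow> 0) (sequentially \<sqinter> principal X)"
    and C01: "((\<lambda>n. fblock \<alpha> C n 0 1) \<longlongrightarrow> 0) (sequentially \<sqinter> principal X)"
    using B(2) C(2) by (simp_all add: asymp_fdiagonal_def)
  show ?thesis
    unfolding asymp_fdiagonal_def fblock_mult[OF \<alpha>]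
    using tendsto_add_zero[OF tendsto_zero_mult_bounded(2)[OF B10 bC] tendsto_zero_mult_bounded(1)[OF C10 bB]]
      tendsto_add_zero[OF tendsto_zero_mult_bounded(1)[OF C01 bB] tendsto_zero_mult_bounded(2)[OF B01 bC]]
    by simp
qed

lemma Mset_iff:
  assumes \<alpha>: "\<forall>X\<in>\<X>. \<bar>\<alpha> X\<bar> \<le> 1"
  shows "T \<in> Mset \<X> \<alpha> \<longleftrightarrow> T \<in> A0 \<and> (\<forall>X\<in>\<X>. asymp_fdiagonal (\<alpha> X) X (block_entry T))"
proof (cases "T \<in> A0")
  case True
  obtain K where K: "blocks_bounded (block_entry T) K"
    using blocks_bounded_block_entry[OF A0_bounded_ops[OF True]] by blast
  have "projP X \<circ> T \<circ> projP X = block_op (restrict_blocks X (block_entry T))" for X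
    using arg_cong[OF A0_eq_block_op[OF True], of "\<lambda>S. projP X \<circ> S \<circ> projP X"] compress_block_op[OF K]
    by simp
  then show ?thesis
    using True \<alpha> DKset_imp_asymp_fdiagonal asymp_fdiagonal_imp_DKset[OF K] unfolding Mset_def by auto
qed (simp add: Mset_def)

lemma block_op_in_Mset_iff:
  assumes "\<forall>X\<in>\<X>. \<bar>\<alpha> X\<bar> \<le> 1" "blocks_bounded B K"
  shows "block_op B \<in> Mset \<X> \<alpha> \<longleftrightarrow> (\<forall>X\<in>\<X>. asymp_fdiagonal (\<alpha> X) X B)"
  using asymp_fdiagonal_cong[of "block_entry (block_op B)" B] block_entry_block_op
  by (simp add: Mset_iff[OF assms(1)] block_op_A0[OF assms(2)])

lemma Mset_block_op:
  assumes "\<forall>X\<in>\<X>. \<bar>\<alpha> X\<bar> \<le> 1" "T \<in> Mset \<X> \<alpha>"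
  obtains K where "blocks_bounded (block_entry T) K" "T = block_op (block_entry T)"
    "\<forall>X\<in>\<X>. asymp_fdiagonal (\<alpha> X) X (block_entry T)"
  using assms A0_eq_block_op blocks_bounded_block_entry A0_bounded_ops unfolding Mset_iff[OF assms(1)] by blast

lemma Mset_closed:
  assumes \<alpha>: "\<forall>X\<in>\<X>. \<bar>\<alpha> X\<bar> \<le> 1" and T: "T \<in> bounded_ops"
    and approx: "\<And>e. e > 0 \<Longrightarrow> \<exists>S\<in>Mset \<X> \<alpha>. opnorm (op_diff T S) < e"
  shows "T \<in> Mset \<X> \<alpha>"
proof -
  have Mset_A0: "Mset \<X> \<alpha> \<subseteq> A0"
    by (auto simp: Mset_iff[OF \<alpha>])
  have "asymp_fdiagonal (\<alpha> X) X (block_entry T)" if X: "X \<in> \<X>" for X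
  proof -
    have "((\<lambda>n. fblock (\<alpha> X) (block_entry T) n p q) \<longlongrightarrow> 0) (sequentially \<sqinter> principal X)"
      if pq: "(p, q) \<in> {(1, 0), (0, 1)}" for p q
    proof (rule tendsto_zero_uniform_approx)
      fix e :: real
      assume "e > 0"
      then obtain S where S: "S \<in> Mset \<X> \<alpha>" "opnorm (op_diff T S) < e / 4"
        using approx[of "e / 4"] by auto
      then have "blocks_bounded (\<lambda>n i j. block_entry T n i j - block_entry S n i j) (e / 4)"
        using norm_entry_diff_le_opnorm[OF T] Mset_A0 A0_bounded_ops
        unfolding blocks_bounded_def block_entry_def by (meson less_imp_le order_trans subsetD)
      then have "cmod (fblock (\<alpha> X) (block_entry T) n p q - fblock (\<alpha> X) (block_entry S) n p q) \<le> e" for n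
        using fblock_norm_le[OF \<alpha>[rule_format, OF X]] by (fastforce simp: fblock_diff)
      moreover have "((\<lambda>n. fblock (\<alpha> X) (block_entry S) n p q) \<longlongrightarrow> 0) (sequentially \<sqinter> principal X)"
        using S(1) X pq by (auto simp: Mset_iff[OF \<alpha>] asymp_fdiagonal_def)
      ultimately show "\<exists>g. (g \<longlongrightarrow> 0) (sequentially \<sqinter> principal X) \<and>
          (\<forall>n. cmod (fblock (\<alpha> X) (block_entry T) n p q - g n) \<le> e)"
        by blast
    qed
    then show ?thesis
      by (simp add: asymp_fdiagonal_def)
  qed
  moreover have "T \<in> A0"
    using approx Mset_A0 by (intro A0_closed[OF T]) blast
  ultimately show ?thesis
    by (simp add: Mset_iff[OF \<alpha>])
qed

lemma Mset_add:
  assumes \<alpha>: "\<forall>X\<in>\<X>. \<bar>\<alpha> X\<bar> \<le> 1" and "S \<in> Mset \<X> \<alpha>" "T \<in> Mset \<X> \<alpha>"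
  shows "op_add S T \<in> Mset \<X> \<alpha>"
proof -
  obtain K L where S: "blocks_bounded (block_entry S) K" "S = block_op (block_entry S)"
      "\<forall>X\<in>\<X>. asymp_fdiagonal (\<alpha> X) X (block_entry S)"
    and T: "blocks_bounded (block_entry T) L" "T = block_op (block_entry T)"
      "\<forall>X\<in>\<X>. asymp_fdiagonal (\<alpha> X) X (block_entry T)"
    using Mset_block_op[OF \<alpha> assms(2)] Mset_block_op[OF \<alpha> assms(3)] by metis
  have "op_add S T = block_op (\<lambda>n i j. block_entry S n i j + block_entry T n i j)"
    by (subst S(2), subst T(2)) (rule op_add_block_op)
  then show ?thesis
    using S(3) T(3) by (simp add: block_op_in_Mset_iff[OF \<alpha> blocks_bounded_add[OF S(1) T(1)]] asymp_fdiagonal_add)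
qed

lemma Mset_comp:
  assumes \<alpha>: "\<forall>X\<in>\<X>. \<bar>\<alpha> X\<bar> \<le> 1" and "S \<in> Mset \<X> \<alpha>" "T \<in> Mset \<X> \<alpha>"
  shows "S \<circ> T \<in> Mset \<X> \<alpha>"
proof -
  obtain K L where S: "blocks_bounded (block_entry S) K" "S = block_op (block_entry S)"
      "\<forall>X\<in>\<X>. asymp_fdiagonal (\<alpha> X) X (block_entry S)"
    and T: "blocks_bounded (block_entry T) L" "T = block_op (block_entry T)"
      "\<forall>X\<in>\<X>. asymp_fdiagonal (\<alpha> X) X (block_entry T)"
    using Mset_block_op[OF \<alpha> assms(2)] Mset_block_op[OF \<alpha> assms(3)] by metis
  have "S \<circ> T = block_op (blocks_mult (block_entry S) (block_entry T))"
    by (subst S(2), subst T(2)) (rule block_op_comp[OF T(1)])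
  then show ?thesis
    using S T \<alpha> by (simp add: block_op_in_Mset_iff[OF \<alpha> blocks_bounded_mult[OF S(1) T(1)]] asymp_fdiagonal_mult)
qed

lemma Mset_scale:
  assumes \<alpha>: "\<forall>X\<in>\<X>. \<bar>\<alpha> X\<bar> \<le> 1" and "T \<in> Mset \<X> \<alpha>"
  shows "op_scale c T \<in> Mset \<X> \<alpha>"
proof -
  obtain L where T: "blocks_bounded (block_entry T) L" "T = block_op (block_entry T)"
      "\<forall>X\<in>\<X>. asymp_fdiagonal (\<alpha> X) X (block_entry T)"
    by (rule Mset_block_op[OF \<alpha> assms(2)])
  have "op_scale c T = block_op (\<lambda>n i j. c * block_entry T n i j)"
    by (subst T(2)) (rule op_scale_block_op)
  then show ?thesis
    using T(3) by (simp add: block_op_in_Mset_iff[OF \<alpha> blocks_bounded_scale[OF T(1)]] asymp_fdiagonal_scale)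
qed

lemma Mset_adj:
  assumes \<alpha>: "\<forall>X\<in>\<X>. \<bar>\<alpha> X\<bar> \<le> 1" and "T \<in> Mset \<X> \<alpha>"
  shows "adj T \<in> Mset \<X> \<alpha>"
proof -
  obtain L where T: "blocks_bounded (block_entry T) L" "T = block_op (block_entry T)"
      "\<forall>X\<in>\<X>. asymp_fdiagonal (\<alpha> X) X (block_entry T)"
    by (rule Mset_block_op[OF \<alpha> assms(2)])
  have "adj T = block_op (blocks_adj (block_entry T))"
    by (subst T(2)) (rule block_op_adj[OF T(1)])
  then show ?thesis
    using T(3) by (simp add: block_op_in_Mset_iff[OF \<alpha> blocks_bounded_adj[OF T(1)]] asymp_fdiagonal_adj)
qed

lemma Mset_cstar_subalg:
  assumes \<alpha>: "\<forall>X\<in>\<X>. \<bar>\<alpha> X\<bar> \<le> 1"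
  shows "is_cstar_subalg (Mset \<X> \<alpha>)"
  unfolding is_cstar_subalg_def
  using Mset_add[OF \<alpha>] Mset_comp[OF \<alpha>] Mset_scale[OF \<alpha>] Mset_adj[OF \<alpha>] Mset_closed[OF \<alpha>] A0_bounded_ops
  by (auto simp: Mset_iff[OF \<alpha>])

section \<open>Spectral projections of hermitian blocks\<close>

definition hermitian_blocks :: "blocks \<Rightarrow> bool" where
  "hermitian_blocks A \<longleftrightarrow> (\<forall>n i j. i < 2 \<longrightarrow> j < 2 \<longrightarrow> A n i j = cnj (A n j i))"

definition half_trace :: "blocks \<Rightarrow> nat \<Rightarrow> real" where
  "half_trace A n = (Re (A n 0 0) + Re (A n 1 1)) / 2"

definition eigen_gap :: "blocks \<Rightarrow> nat \<Rightarrow> real" where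
  "eigen_gap A n = sqrt ((Re (A n 0 0) - Re (A n 1 1))\<^sup>2 + 4 * (cmod (A n 0 1))\<^sup>2)"

definition traceless_part :: "blocks \<Rightarrow> blocks" where
  "traceless_part A n i j = A n i j - of_real (half_trace A n) * of_bool (i = j)"

definition bin_indicator :: "real \<Rightarrow> real \<Rightarrow> int \<Rightarrow> real" where
  "bin_indicator \<eta> x k = of_bool (\<lfloor>x / \<eta>\<rfloor> = k)"

text \<open>For hermitian \<open>A\<close> with \<open>t = half_trace A n\<close> and \<open>g = eigen_gap A n\<close>, the eigenvalues of
  \<open>A n\<close> are \<open>t \<plusminus> g / 2\<close> and, for \<open>g > 0\<close>, the eigenprojections are \<open>I / 2 \<plusminus> Z / g\<close> with
  \<open>Z = traceless_part A n\<close>. The block \<open>spectral_proj \<eta> A k n\<close>, written as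
  \<open>proj_scalar \<cdot> I + (proj_coeff / g) \<cdot> Z\<close>, is the sum of the eigenprojections whose eigenvalue lies in
  \<open>[k \<eta>, (k + 1) \<eta>)\<close>; a block with \<open>g < \<eta>\<close> is treated as the scalar \<open>t\<close>.\<close>

definition proj_scalar :: "real \<Rightarrow> blocks \<Rightarrow> int \<Rightarrow> nat \<Rightarrow> real" where
  "proj_scalar \<eta> A k n = (if eigen_gap A n < \<eta> then bin_indicator \<eta> (half_trace A n) k
     else (bin_indicator \<eta> (half_trace A n - eigen_gap A n / 2) k + bin_indicator \<eta> (half_trace A n + eigen_gap A n / 2) k) / 2)"

definition proj_coeff :: "real \<Rightarrow> blocks \<Rightarrow> int \<Rightarrow> nat \<Rightarrow> real" where
  "proj_coeff \<eta> A k n = (if eigen_gap A n < \<eta> then 0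
     else bin_indicator \<eta> (half_trace A n + eigen_gap A n / 2) k - bin_indicator \<eta> (half_trace A n - eigen_gap A n / 2) k)"

definition spectral_proj :: "real \<Rightarrow> blocks \<Rightarrow> int \<Rightarrow> blocks" where
  "spectral_proj \<eta> A k n i j =
     of_real (proj_scalar \<eta> A k n) * of_bool (i = j) + of_real (proj_coeff \<eta> A k n / eigen_gap A n) * traceless_part A n i j"

lemma hermitian_blocks_cnj:
  "hermitian_blocks A \<Longrightarrow> i < 2 \<Longrightarrow> j < 2 \<Longrightarrow> A n i j = cnj (A n j i)"
  unfolding hermitian_blocks_def by blast

lemma hermitian_blocksD:
  assumes "hermitian_blocks A"
  shows "A n 0 0 = of_real (Re (A n 0 0))" "A n 1 1 = of_real (Re (A n 1 1))" "A n 1 0 = cnj (A n 0 1)"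
proof -
  have "A n 0 0 = cnj (A n 0 0)" "A n 1 1 = cnj (A n 1 1)" "A n 1 0 = cnj (A n 0 1)"
    by (rule hermitian_blocks_cnj[OF assms]; simp)+
  then show "A n 0 0 = of_real (Re (A n 0 0))" "A n 1 1 = of_real (Re (A n 1 1))" "A n 1 0 = cnj (A n 0 1)"
    by (simp_all add: complex_eq_iff)
qed

lemma traceless_part_eqs:
  assumes "hermitian_blocks A"
  shows "traceless_part A n 0 0 = of_real ((Re (A n 0 0) - Re (A n 1 1)) / 2)"
    and "traceless_part A n 1 1 = - of_real ((Re (A n 0 0) - Re (A n 1 1)) / 2)"
    and "traceless_part A n 0 1 = A n 0 1" "traceless_part A n 1 0 = cnj (A n 0 1)"
proof -
  note h = hermitian_blocksD[OF assms, of n]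
  have r0: "Re (A n 0 0) - half_trace A n = (Re (A n 0 0) - Re (A n 1 1)) / 2"
    and r1: "Re (A n 1 1) - half_trace A n = - ((Re (A n 0 0) - Re (A n 1 1)) / 2)"
    by (simp_all add: half_trace_def field_simps)
  have "traceless_part A n 0 0 = of_real (Re (A n 0 0) - half_trace A n)"
    unfolding traceless_part_def by (subst h(1)) simp
  then show "traceless_part A n 0 0 = of_real ((Re (A n 0 0) - Re (A n 1 1)) / 2)"
    unfolding r0 .
  have "traceless_part A n 1 1 = of_real (Re (A n 1 1) - half_trace A n)"
    unfolding traceless_part_def by (subst h(2)) (simp del: One_nat_def)
  then show "traceless_part A n 1 1 = - of_real ((Re (A n 0 0) - Re (A n 1 1)) / 2)"
    unfolding r1 by simp
  show "traceless_part A n 0 1 = A n 0 1" "traceless_part A n 1 0 = cnj (A n 0 1)"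
    using h(3) by (simp_all add: traceless_part_def)
qed

lemma eigen_gap_nonneg: "0 \<le> eigen_gap A n"
  by (simp add: eigen_gap_def)

text \<open>Cayley--Hamilton for the traceless part: \<open>Z\<^sup>2 = (g / 2)\<^sup>2 I\<close>.\<close>

lemma traceless_part_square:
  assumes "hermitian_blocks A"
  shows "4 * (traceless_part A n 0 0 * traceless_part A n 0 0 + traceless_part A n 0 1 * traceless_part A n 1 0)
    = of_real ((eigen_gap A n)\<^sup>2)"
proof -
  define d where "d = (Re (A n 0 0) - Re (A n 1 1)) / 2"
  have "0 \<le> (Re (A n 0 0) - Re (A n 1 1))\<^sup>2 + 4 * (cmod (A n 0 1))\<^sup>2"
    by simp
  then have "(eigen_gap A n)\<^sup>2 = (Re (A n 0 0) - Re (A n 1 1))\<^sup>2 + 4 * (cmod (A n 0 1))\<^sup>2"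
    unfolding eigen_gap_def by (rule real_sqrt_pow2)
  also have "\<dots> = 4 * (d * d + (cmod (A n 0 1))\<^sup>2)"
    by (simp add: d_def power2_eq_square field_simps)
  finally have "(eigen_gap A n)\<^sup>2 = 4 * (d * d + (cmod (A n 0 1))\<^sup>2)" .
  moreover have "A n 0 1 * cnj (A n 0 1) = of_real ((cmod (A n 0 1))\<^sup>2)"
    by (rule complex_norm_square[symmetric])
  ultimately show ?thesis
    unfolding traceless_part_eqs[OF assms] d_def[symmetric] by simp
qed

lemma traceless_part_normalized:
  assumes "hermitian_blocks A" "eigen_gap A n \<noteq> 0"
  defines "w \<equiv> complex_of_real (1 / eigen_gap A n)"
  shows "4 * (w * traceless_part A n 0 0 * (w * traceless_part A n 0 0) + w * traceless_part A n 0 1 * (w * traceless_part A n 1 0)) = 1"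
proof -
  have "4 * (w * traceless_part A n 0 0 * (w * traceless_part A n 0 0) + w * traceless_part A n 0 1 * (w * traceless_part A n 1 0))
      = w * w * (4 * (traceless_part A n 0 0 * traceless_part A n 0 0 + traceless_part A n 0 1 * traceless_part A n 1 0))"
    by (simp add: algebra_simps)
  also have "\<dots> = 1"
    unfolding traceless_part_square[OF assms(1)] w_def using assms(2) by (simp add: power2_eq_square flip: of_real_mult)
  finally show ?thesis .
qed

lemma norm_traceless_part_le:
  assumes "hermitian_blocks A" "i < 2" "j < 2"
  shows "cmod (traceless_part A n i j) \<le> eigen_gap A n / 2"
proof -
  have "\<bar>Re (A n 0 0) - Re (A n 1 1)\<bar> \<le> eigen_gap A n" "2 * cmod (A n 0 1) \<le> eigen_gap A n"
    unfolding eigen_gap_def by (simp_all add: real_le_rsqrt power_mult_distrib)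
  with assms(2,3) show ?thesis
    by (cases rule: less_2_pair_cases)
      (simp_all add: traceless_part_eqs[OF assms(1)] norm_of_real del: One_nat_def flip: of_real_diff)
qed

lemma bin_indicator_cases: "bin_indicator \<eta> x k = 0 \<or> bin_indicator \<eta> x k = 1"
  by (simp add: bin_indicator_def)

lemma proj_scalar_coeff_eqs:
  fixes \<eta> :: real and A :: blocks and k :: int and n :: nat
  defines "m \<equiv> complex_of_real (proj_scalar \<eta> A k n)" and "e \<equiv> complex_of_real (proj_coeff \<eta> A k n)"
  shows "4 * m * m + e * e = 4 * m" and "2 * m * e = e"
proof -
  have "4 * proj_scalar \<eta> A k n * proj_scalar \<eta> A k n + proj_coeff \<eta> A k n * proj_coeff \<eta> A k n = 4 * proj_scalar \<eta> A k n"
    and "2 * proj_scalar \<eta> A k n * proj_coeff \<eta> A k n = proj_coeff \<eta> A k n"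
    using bin_indicator_cases[of \<eta> "half_trace A n" k]
      bin_indicator_cases[of \<eta> "half_trace A n - eigen_gap A n / 2" k]
      bin_indicator_cases[of \<eta> "half_trace A n + eigen_gap A n / 2" k]
    by (auto simp: proj_scalar_def proj_coeff_def)
  from arg_cong[OF this(1), of complex_of_real] arg_cong[OF this(2), of complex_of_real]
  show "4 * m * m + e * e = 4 * m" "2 * m * e = e"
    unfolding m_def e_def by simp_all
qed

lemma abs_proj_scalar_le: "\<bar>proj_scalar \<eta> A k n\<bar> \<le> 1"
  using bin_indicator_cases[of \<eta> "half_trace A n" k]
    bin_indicator_cases[of \<eta> "half_trace A n - eigen_gap A n / 2" k]
    bin_indicator_cases[of \<eta> "half_trace A n + eigen_gap A n / 2" k]
  by (auto simp: proj_scalar_def)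

lemma abs_proj_coeff_le: "\<bar>proj_coeff \<eta> A k n\<bar> \<le> 1"
  using bin_indicator_cases[of \<eta> "half_trace A n - eigen_gap A n / 2" k]
    bin_indicator_cases[of \<eta> "half_trace A n + eigen_gap A n / 2" k]
  by (auto simp: proj_coeff_def)

lemma abs_proj_coeff_div_le:
  assumes "\<eta> > 0"
  shows "\<bar>proj_coeff \<eta> A k n / eigen_gap A n\<bar> \<le> 1 / \<eta>"
proof (cases "eigen_gap A n < \<eta>")
  case False
  then have "\<bar>proj_coeff \<eta> A k n\<bar> / eigen_gap A n \<le> 1 / \<eta>"
    using assms abs_proj_coeff_le[of \<eta> A k n] by (intro frac_le) auto
  then show ?thesis
    by (simp add: abs_divide eigen_gap_nonneg)
qed (use assms in \<open>simp add: proj_coeff_def\<close>)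

lemma idempotent_2x2:
  fixes m e p q r :: complex
  assumes "4 * (p * p + q * r) = 1" "4 * m * m + e * e = 4 * m" "2 * m * e = e"
  shows "(m + e * p) * (m + e * p) + (e * q) * (e * r) = m + e * p"
    and "(m + e * p) * (e * q) + (e * q) * (m - e * p) = e * q"
    and "(e * r) * (m + e * p) + (m - e * p) * (e * r) = e * r"
    and "(e * r) * (e * q) + (m - e * p) * (m - e * p) = m - e * p"
  using assms by algebra+

lemma spectral_proj_idempotent:
  assumes A: "hermitian_blocks A" and \<eta>: "\<eta> > 0" and "i < 2" "j < 2"
  shows "blocks_mult (spectral_proj \<eta> A k) (spectral_proj \<eta> A k) n i j = spectral_proj \<eta> A k n i j"
proof (cases "eigen_gap A n < \<eta>")
  case True
  then have "proj_coeff \<eta> A k n = 0" "proj_scalar \<eta> A k n * proj_scalar \<eta> A k n = proj_scalar \<eta> A k n"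
    using bin_indicator_cases[of \<eta> "half_trace A n" k] by (auto simp: proj_coeff_def proj_scalar_def)
  then have c: "complex_of_real (proj_scalar \<eta> A k n) * of_real (proj_scalar \<eta> A k n) = of_real (proj_scalar \<eta> A k n)"
    and P: "spectral_proj \<eta> A k n i' j' = of_real (proj_scalar \<eta> A k n) * of_bool (i' = j')" for i' j'
    by (simp_all add: spectral_proj_def flip: of_real_mult)
  from \<open>i < 2\<close> \<open>j < 2\<close> show ?thesis
    by (cases rule: less_2_pair_cases) (simp_all add: blocks_mult_def P c)
next
  case False
  define m where "m = complex_of_real (proj_scalar \<eta> A k n)"
  define e where "e = complex_of_real (proj_coeff \<eta> A k n)"
  define w where "w = complex_of_real (1 / eigen_gap A n)"
  define p where "p = w * traceless_part A n 0 0"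
  define q where "q = w * traceless_part A n 0 1"
  define r where "r = w * traceless_part A n 1 0"
  have coeff: "complex_of_real (proj_coeff \<eta> A k n / eigen_gap A n) = e * w"
    by (simp add: e_def w_def)
  have P: "spectral_proj \<eta> A k n 0 0 = m + e * p" "spectral_proj \<eta> A k n 0 1 = e * q"
    "spectral_proj \<eta> A k n 1 0 = e * r" "spectral_proj \<eta> A k n 1 1 = m - e * p"
  proof -
    have "traceless_part A n 1 1 = - traceless_part A n 0 0"
      using traceless_part_eqs(1,2)[OF A, of n] by simp
    then show "spectral_proj \<eta> A k n 0 0 = m + e * p" "spectral_proj \<eta> A k n 0 1 = e * q"
      "spectral_proj \<eta> A k n 1 0 = e * r" "spectral_proj \<eta> A k n 1 1 = m - e * p"
      unfolding spectral_proj_def coeff by (simp_all add: m_def p_def q_def r_def del: One_nat_def)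
  qed
  have pqr: "4 * (p * p + q * r) = 1"
    unfolding p_def q_def r_def w_def using False \<eta> by (intro traceless_part_normalized[OF A]) simp
  note me = proj_scalar_coeff_eqs[of \<eta> A k n, folded m_def e_def]
  from \<open>i < 2\<close> \<open>j < 2\<close> show ?thesis
    by (cases rule: less_2_pair_cases) (simp_all only: blocks_mult_def P idempotent_2x2[OF pqr me])
qed

lemma spectral_proj_adj:
  assumes "hermitian_blocks A" "i < 2" "j < 2"
  shows "blocks_adj (spectral_proj \<eta> A k) n i j = spectral_proj \<eta> A k n i j"
proof -
  have "cnj (A n j i) = A n i j"
    using hermitian_blocks_cnj[OF assms(1) assms(3,2), of n] by simp
  then show ?thesis
    by (simp add: blocks_adj_def spectral_proj_def traceless_part_def)
qed

lemma norm_proj_coeff_traceless_le: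
  assumes "hermitian_blocks A" "\<eta> > 0" "i < 2" "j < 2"
  shows "cmod (of_real (proj_coeff \<eta> A k n / eigen_gap A n) * traceless_part A n i j) \<le> 1 / 2"
proof (cases "eigen_gap A n < \<eta>")
  case False
  then have gap: "eigen_gap A n > 0"
    using assms(2) by linarith
  have "cmod (of_real (proj_coeff \<eta> A k n / eigen_gap A n) * traceless_part A n i j)
      = \<bar>proj_coeff \<eta> A k n / eigen_gap A n\<bar> * cmod (traceless_part A n i j)"
    by (simp only: norm_mult norm_of_real)
  also have "\<dots> = \<bar>proj_coeff \<eta> A k n\<bar> / eigen_gap A n * cmod (traceless_part A n i j)"
    using gap by (simp add: abs_divide)
  also have "\<dots> \<le> 1 / eigen_gap A n * (eigen_gap A n / 2)"
    using gap abs_proj_coeff_le[of \<eta> A k n] norm_traceless_part_le[OF assms(1,3,4)]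
    by (intro mult_mono divide_right_mono) auto
  finally show ?thesis
    using gap by simp
qed (simp add: proj_coeff_def)

lemma blocks_bounded_spectral_proj:
  assumes "hermitian_blocks A" "\<eta> > 0"
  shows "blocks_bounded (spectral_proj \<eta> A k) 2"
  unfolding blocks_bounded_def
proof (intro allI impI)
  fix n i j :: nat
  assume ij: "i < 2" "j < 2"
  have "cmod (of_real (proj_scalar \<eta> A k n) * of_bool (i = j) :: complex) \<le> 1"
    using abs_proj_scalar_le[of \<eta> A k n] by (simp add: norm_mult)
  then show "cmod (spectral_proj \<eta> A k n i j) \<le> 2"
    using norm_triangle_ineq[of "of_real (proj_scalar \<eta> A k n) * of_bool (i = j)"
        "of_real (proj_coeff \<eta> A k n / eigen_gap A n) * traceless_part A n i j"]
      norm_proj_coeff_traceless_le[OF assms ij, of k n]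
    unfolding spectral_proj_def by linarith
qed

lemma spectral_proj_is_projection:
  assumes "hermitian_blocks A" "\<eta> > 0"
  shows "is_projection (block_op (spectral_proj \<eta> A k))"
  unfolding is_projection_def
proof (intro conjI)
  note bounded = blocks_bounded_spectral_proj[OF assms, of k]
  show "block_op (spectral_proj \<eta> A k) \<in> bounded_ops"
    by (rule block_op_bounded[OF bounded])
  show "block_op (spectral_proj \<eta> A k) \<circ> block_op (spectral_proj \<eta> A k) = block_op (spectral_proj \<eta> A k)"
    unfolding block_op_comp[OF bounded] by (rule block_op_cong) (rule spectral_proj_idempotent[OF assms])
  show "adj (block_op (spectral_proj \<eta> A k)) = block_op (spectral_proj \<eta> A k)"
    unfolding block_op_adj[OF bounded] by (rule block_op_cong) (rule spectral_proj_adj[OF assms(1)])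
qed

lemma spectral_proj_affine:
  "spectral_proj \<eta> A k n i j =
     (of_real (proj_scalar \<eta> A k n) - of_real (proj_coeff \<eta> A k n / eigen_gap A n) * of_real (half_trace A n)) * of_bool (i = j)
     + of_real (proj_coeff \<eta> A k n / eigen_gap A n) * A n i j"
  unfolding spectral_proj_def traceless_part_def by (simp add: algebra_simps)

lemma spectral_proj_in_Mset:
  assumes \<alpha>: "\<forall>X\<in>\<X>. \<bar>\<alpha> X\<bar> \<le> 1" and A: "hermitian_blocks A" "\<forall>X\<in>\<X>. asymp_fdiagonal (\<alpha> X) X A"
    and \<eta>: "\<eta> > 0"
  shows "block_op (spectral_proj \<eta> A k) \<in> Mset \<X> \<alpha>"
  unfolding block_op_in_Mset_iff[OF \<alpha> blocks_bounded_spectral_proj[OF A(1) \<eta>]]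
proof
  fix X
  assume X: "X \<in> \<X>"
  let ?y = "\<lambda>n. complex_of_real (proj_coeff \<eta> A k n / eigen_gap A n)"
  have y: "cmod (?y n) \<le> 1 / \<eta>" for n
    unfolding norm_of_real by (rule abs_proj_coeff_div_le[OF \<eta>])
  have affine: "fblock (\<alpha> X) (spectral_proj \<eta> A k) n 1 0 = ?y n * fblock (\<alpha> X) A n 1 0"
    "fblock (\<alpha> X) (spectral_proj \<eta> A k) n 0 1 = ?y n * fblock (\<alpha> X) A n 0 1" for n
    by (rule fblock_offdiag_affine[OF \<alpha>[rule_format, OF X]], rule spectral_proj_affine)+
  show "asymp_fdiagonal (\<alpha> X) X (spectral_proj \<eta> A k)"
    unfolding asymp_fdiagonal_def affine
    by (intro conjI tendsto_zero_mult_bounded(1)[OF _ y]) (use A(2) X in \<open>simp_all add: asymp_fdiagonal_def\<close>)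
qed

definition spectral_sum :: "real \<Rightarrow> blocks \<Rightarrow> int set \<Rightarrow> blocks" where
  "spectral_sum \<eta> A J n i j = (\<Sum>k\<in>J. of_real (of_int k * \<eta>) * spectral_proj \<eta> A k n i j)"

lemma spectral_sum_eq:
  "spectral_sum \<eta> A J n i j =
     of_real (\<Sum>k\<in>J. of_int k * \<eta> * proj_scalar \<eta> A k n) * of_bool (i = j)
     + of_real ((\<Sum>k\<in>J. of_int k * \<eta> * proj_coeff \<eta> A k n) / eigen_gap A n) * traceless_part A n i j"
proof -
  have "of_real (of_int k * \<eta>) * spectral_proj \<eta> A k n i j =
      of_real (of_int k * \<eta> * proj_scalar \<eta> A k n) * of_bool (i = j)
      + of_real (of_int k * \<eta> * proj_coeff \<eta> A k n / eigen_gap A n) * traceless_part A n i j" for k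
    by (simp add: spectral_proj_def algebra_simps)
  then have "spectral_sum \<eta> A J n i j =
      (\<Sum>k\<in>J. of_real (of_int k * \<eta> * proj_scalar \<eta> A k n)) * of_bool (i = j)
      + (\<Sum>k\<in>J. of_real (of_int k * \<eta> * proj_coeff \<eta> A k n / eigen_gap A n)) * traceless_part A n i j"
    unfolding spectral_sum_def by (simp only: sum.distrib sum_distrib_right)
  then show ?thesis
    by (simp only: of_real_sum sum_divide_distrib)
qed

lemma sum_bin_indicator:
  assumes "finite J" "\<lfloor>x / \<eta>\<rfloor> \<in> J"
  shows "(\<Sum>k\<in>J. of_int k * \<eta> * bin_indicator \<eta> x k) = of_int \<lfloor>x / \<eta>\<rfloor> * \<eta>"
proof -
  have "(\<Sum>k\<in>J. of_int k * \<eta> * bin_indicator \<eta> x k) = (\<Sum>k\<in>J. if \<lfloor>x / \<eta>\<rfloor> = k then of_int k * \<eta> else 0)"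
    by (rule sum.cong) (auto simp: bin_indicator_def)
  then show ?thesis
    using assms by simp
qed

lemma spectral_sum_small_gap:
  assumes "finite J" "\<lfloor>half_trace A n / \<eta>\<rfloor> \<in> J" "eigen_gap A n < \<eta>"
  shows "(\<Sum>k\<in>J. of_int k * \<eta> * proj_scalar \<eta> A k n) = of_int \<lfloor>half_trace A n / \<eta>\<rfloor> * \<eta>"
    and "(\<Sum>k\<in>J. of_int k * \<eta> * proj_coeff \<eta> A k n) = 0"
  using sum_bin_indicator[OF assms(1,2)] assms(3) by (simp_all add: proj_scalar_def proj_coeff_def)

lemma spectral_sum_large_gap:
  defines "l \<equiv> \<lambda>A n. half_trace A n - eigen_gap A n / 2" and "u \<equiv> \<lambda>A n. half_trace A n + eigen_gap A n / 2"
  assumes J: "finite J" "\<lfloor>l A n / \<eta>\<rfloor> \<in> J" "\<lfloor>u A n / \<eta>\<rfloor> \<in> J" and gap: "\<not> eigen_gap A n < \<eta>"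
  shows "(\<Sum>k\<in>J. of_int k * \<eta> * proj_scalar \<eta> A k n) = (of_int \<lfloor>l A n / \<eta>\<rfloor> * \<eta> + of_int \<lfloor>u A n / \<eta>\<rfloor> * \<eta>) / 2"
    and "(\<Sum>k\<in>J. of_int k * \<eta> * proj_coeff \<eta> A k n) = of_int \<lfloor>u A n / \<eta>\<rfloor> * \<eta> - of_int \<lfloor>l A n / \<eta>\<rfloor> * \<eta>"
proof -
  have "(\<Sum>k\<in>J. of_int k * \<eta> * proj_scalar \<eta> A k n)
      = (\<Sum>k\<in>J. of_int k * \<eta> * bin_indicator \<eta> (l A n) k) / 2 + (\<Sum>k\<in>J. of_int k * \<eta> * bin_indicator \<eta> (u A n) k) / 2"
    using gap by (simp add: proj_scalar_def l_def u_def sum_divide_distrib[symmetric] sum.distrib[symmetric] algebra_simps)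
  then show "(\<Sum>k\<in>J. of_int k * \<eta> * proj_scalar \<eta> A k n) = (of_int \<lfloor>l A n / \<eta>\<rfloor> * \<eta> + of_int \<lfloor>u A n / \<eta>\<rfloor> * \<eta>) / 2"
    using sum_bin_indicator[OF J(1)] J(2,3) by simp
  have "(\<Sum>k\<in>J. of_int k * \<eta> * proj_coeff \<eta> A k n)
      = (\<Sum>k\<in>J. of_int k * \<eta> * bin_indicator \<eta> (u A n) k) - (\<Sum>k\<in>J. of_int k * \<eta> * bin_indicator \<eta> (l A n) k)"
    using gap by (simp add: proj_coeff_def l_def u_def sum_subtractf[symmetric] algebra_simps)
  then show "(\<Sum>k\<in>J. of_int k * \<eta> * proj_coeff \<eta> A k n) = of_int \<lfloor>u A n / \<eta>\<rfloor> * \<eta> - of_int \<lfloor>l A n / \<eta>\<rfloor> * \<eta>"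
    using sum_bin_indicator[OF J(1)] J(2,3) by simp
qed

lemma abs_half_trace_le:
  assumes "blocks_bounded A K"
  shows "\<bar>half_trace A n\<bar> \<le> K"
proof -
  have "\<bar>Re (A n 0 0)\<bar> \<le> K" "\<bar>Re (A n 1 1)\<bar> \<le> K"
    using order_trans[OF abs_Re_le_cmod blocks_boundedD[OF assms]] by simp_all
  then have "Re (A n 0 0) + Re (A n 1 1) \<le> 2 * K" "- (Re (A n 0 0) + Re (A n 1 1)) \<le> 2 * K"
    by (simp_all add: abs_le_iff)
  then show ?thesis
    unfolding half_trace_def abs_le_iff by (simp add: field_simps)
qed

lemma eigen_gap_le:
  assumes B: "blocks_bounded A K"
  shows "eigen_gap A n \<le> 3 * K"
proof -
  have K: "0 \<le> K"
    by (rule blocks_bounded_nonneg[OF B])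
  have "\<bar>Re (A n 0 0)\<bar> \<le> K" "\<bar>Re (A n 1 1)\<bar> \<le> K" "cmod (A n 0 1) \<le> K"
    using order_trans[OF abs_Re_le_cmod blocks_boundedD[OF B]] blocks_boundedD[OF B] by simp_all
  then have "\<bar>Re (A n 0 0) - Re (A n 1 1)\<bar> \<le> 2 * K" "cmod (A n 0 1) \<le> K"
    by linarith+
  then have "\<bar>Re (A n 0 0) - Re (A n 1 1)\<bar>\<^sup>2 \<le> (2 * K)\<^sup>2" "(cmod (A n 0 1))\<^sup>2 \<le> K\<^sup>2"
    by (intro power_mono; simp)+
  then have "(Re (A n 0 0) - Re (A n 1 1))\<^sup>2 \<le> (2 * K)\<^sup>2" "(cmod (A n 0 1))\<^sup>2 \<le> K\<^sup>2"
    by simp_all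
  then have "(Re (A n 0 0) - Re (A n 1 1))\<^sup>2 + 4 * (cmod (A n 0 1))\<^sup>2 \<le> (3 * K)\<^sup>2"
    by (simp add: power_mult_distrib) (use zero_le_power2[of K] in linarith)
  then show ?thesis
    unfolding eigen_gap_def using K by (simp add: real_sqrt_le_iff real_le_lsqrt)
qed

lemma norm_scalar_plus_le:
  assumes "\<bar>x\<bar> \<le> a" "\<bar>y\<bar> * cmod z \<le> b"
  shows "cmod (of_real x * of_bool (i = j) + of_real y * z) \<le> a + b"
proof -
  have "cmod (of_real x * of_bool (i = j) + of_real y * z) \<le> cmod (of_real x * of_bool (i = j) :: complex) + cmod (of_real y * z)"
    by (rule norm_triangle_ineq)
  moreover have "cmod (of_real y * z) = \<bar>y\<bar> * cmod z"
    by (simp add: norm_mult)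
  moreover have "cmod (of_real x * of_bool (i = j) :: complex) \<le> \<bar>x\<bar>"
    by (simp add: norm_mult)
  ultimately show ?thesis
    using assms by linarith
qed

lemma spectral_bins_bounded:
  assumes A: "blocks_bounded A K" and \<eta>: "\<eta> > 0" and M: "3 * K / \<eta> + 1 \<le> of_int M"
  shows "\<lfloor>half_trace A n / \<eta>\<rfloor> \<in> {-M..M}"
    and "\<lfloor>(half_trace A n - eigen_gap A n / 2) / \<eta>\<rfloor> \<in> {-M..M}"
    and "\<lfloor>(half_trace A n + eigen_gap A n / 2) / \<eta>\<rfloor> \<in> {-M..M}"
proof -
  have "\<bar>half_trace A n\<bar> \<le> 3 * K" "\<bar>half_trace A n - eigen_gap A n / 2\<bar> \<le> 3 * K"
    "\<bar>half_trace A n + eigen_gap A n / 2\<bar> \<le> 3 * K"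
    using abs_half_trace_le[OF A, of n] eigen_gap_nonneg[of A n] eigen_gap_le[OF A, of n]
    by (auto simp: abs_le_iff)
  then show "\<lfloor>half_trace A n / \<eta>\<rfloor> \<in> {-M..M}"
    and "\<lfloor>(half_trace A n - eigen_gap A n / 2) / \<eta>\<rfloor> \<in> {-M..M}"
    and "\<lfloor>(half_trace A n + eigen_gap A n / 2) / \<eta>\<rfloor> \<in> {-M..M}"
    by (blast intro: floor_divide_bounded[OF \<eta> _ M])+
qed

lemma spectral_scalar_error:
  assumes A: "blocks_bounded A K" and \<eta>: "\<eta> > 0" and M: "3 * K / \<eta> + 1 \<le> of_int M"
  shows "\<bar>half_trace A n - (\<Sum>k\<in>{-M..M}. of_int k * \<eta> * proj_scalar \<eta> A k n)\<bar> \<le> \<eta>"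
proof (cases "eigen_gap A n < \<eta>")
  case True
  then show ?thesis
    using spectral_sum_small_gap(1)[OF _ spectral_bins_bounded(1)[OF A \<eta> M]]
      floor_divide_mult_bounds[OF \<eta>, of "half_trace A n"] by simp
next
  case False
  let ?l = "half_trace A n - eigen_gap A n / 2" and ?u = "half_trace A n + eigen_gap A n / 2"
  define a where "a = of_int \<lfloor>?l / \<eta>\<rfloor> * \<eta>"
  define b where "b = of_int \<lfloor>?u / \<eta>\<rfloor> * \<eta>"
  have "(\<Sum>k\<in>{-M..M}. of_int k * \<eta> * proj_scalar \<eta> A k n) = (a + b) / 2"
    unfolding a_def b_def by (rule spectral_sum_large_gap(1)[OF _ spectral_bins_bounded(2,3)[OF A \<eta> M] False]) simp
  then have "half_trace A n - (\<Sum>k\<in>{-M..M}. of_int k * \<eta> * proj_scalar \<eta> A k n) = ((?l - a) + (?u - b)) / 2"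
    by (simp add: field_simps)
  then show ?thesis
    using floor_divide_mult_bounds[OF \<eta>, of ?l] floor_divide_mult_bounds[OF \<eta>, of ?u]
    unfolding a_def[symmetric] b_def[symmetric] by simp
qed

lemma spectral_coeff_error:
  assumes A: "hermitian_blocks A" "blocks_bounded A K" and \<eta>: "\<eta> > 0" and M: "3 * K / \<eta> + 1 \<le> of_int M"
    and ij: "i < 2" "j < 2"
  shows "\<bar>1 - (\<Sum>k\<in>{-M..M}. of_int k * \<eta> * proj_coeff \<eta> A k n) / eigen_gap A n\<bar> * cmod (traceless_part A n i j) \<le> \<eta>"
proof (cases "eigen_gap A n < \<eta>")
  case True
  then show ?thesis
    using spectral_sum_small_gap(2)[OF _ spectral_bins_bounded(1)[OF A(2) \<eta> M]] norm_traceless_part_le[OF A(1) ij, of n]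
    by simp (use norm_ge_zero[of "traceless_part A n i j"] in linarith)
next
  case False
  let ?l = "half_trace A n - eigen_gap A n / 2" and ?u = "half_trace A n + eigen_gap A n / 2"
  define g where "g = eigen_gap A n"
  have "g > 0"
    using False \<eta> by (simp add: g_def)
  define a where "a = of_int \<lfloor>?l / \<eta>\<rfloor> * \<eta>"
  define b where "b = of_int \<lfloor>?u / \<eta>\<rfloor> * \<eta>"
  have S: "(\<Sum>k\<in>{-M..M}. of_int k * \<eta> * proj_coeff \<eta> A k n) = b - a"
    unfolding a_def b_def by (rule spectral_sum_large_gap(2)[OF _ spectral_bins_bounded(2,3)[OF A(2) \<eta> M] False]) simp
  have "1 - (\<Sum>k\<in>{-M..M}. of_int k * \<eta> * proj_coeff \<eta> A k n) / g = ((?u - b) - (?l - a)) / g"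
    unfolding S using \<open>g > 0\<close> by (simp add: g_def field_simps)
  then have "\<bar>1 - (\<Sum>k\<in>{-M..M}. of_int k * \<eta> * proj_coeff \<eta> A k n) / g\<bar> * cmod (traceless_part A n i j) \<le> \<eta> / g * (g / 2)"
    using floor_divide_mult_bounds[OF \<eta>, of ?l] floor_divide_mult_bounds[OF \<eta>, of ?u]
      norm_traceless_part_le[OF A(1) ij, of n] \<open>g > 0\<close>
    unfolding a_def[symmetric] b_def[symmetric]
    by (intro mult_mono) (auto simp: g_def abs_divide divide_right_mono)
  also have "\<dots> \<le> \<eta>"
    using \<open>g > 0\<close> \<eta> by simp
  finally show ?thesis
    by (simp add: g_def)
qed

text \<open>Rounding the eigenvalues down to multiples of \<open>\<eta>\<close> moves every entry by at most \<open>2 \<eta>\<close>.\<close>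

lemma spectral_sum_error:
  assumes A: "hermitian_blocks A" "blocks_bounded A K" and \<eta>: "\<eta> > 0" and M: "3 * K / \<eta> + 1 \<le> of_int M"
    and ij: "i < 2" "j < 2"
  shows "cmod (A n i j - spectral_sum \<eta> A {-M..M} n i j) \<le> 2 * \<eta>"
proof -
  have "A n i j - spectral_sum \<eta> A {-M..M} n i j =
      of_real (half_trace A n - (\<Sum>k\<in>{-M..M}. of_int k * \<eta> * proj_scalar \<eta> A k n)) * of_bool (i = j)
      + of_real (1 - (\<Sum>k\<in>{-M..M}. of_int k * \<eta> * proj_coeff \<eta> A k n) / eigen_gap A n) * traceless_part A n i j"
    unfolding spectral_sum_eq by (simp add: traceless_part_def algebra_simps)
  also have "cmod \<dots> \<le> \<eta> + \<eta>"
    by (intro norm_scalar_plus_le spectral_scalar_error[OF A(2) \<eta> M] spectral_coeff_error[OF A \<eta> M ij])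
  finally show ?thesis
    by simp
qed

lemma cstar_subalg_block_op_sum:
  assumes C: "is_cstar_subalg C" and J: "finite J" "J \<noteq> {}" and P: "\<And>k. k \<in> J \<Longrightarrow> block_op (P k) \<in> C"
  shows "block_op (\<lambda>n i j. \<Sum>k\<in>J. c k * P k n i j) \<in> C"
  using J P
proof (induction J rule: finite_ne_induct)
  case (singleton k)
  then show ?case
    using C unfolding is_cstar_subalg_def by (simp flip: op_scale_block_op)
next
  case (insert k J)
  have "block_op (\<lambda>n i j. \<Sum>k\<in>insert k J. c k * P k n i j)
      = op_add (op_scale (c k) (block_op (P k))) (block_op (\<lambda>n i j. \<Sum>k\<in>J. c k * P k n i j))"
    using insert.hyps by (simp add: op_scale_block_op op_add_block_op)
  then show ?case
    using C insert unfolding is_cstar_subalg_def by simp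
qed

lemma hermitian_block_op_in_cstar:
  assumes C: "is_cstar_subalg C" and proj: "{P \<in> Mset \<X> \<alpha>. is_projection P} \<subseteq> C"
    and \<alpha>: "\<forall>X\<in>\<X>. \<bar>\<alpha> X\<bar> \<le> 1"
    and A: "hermitian_blocks A" "blocks_bounded A K" "\<forall>X\<in>\<X>. asymp_fdiagonal (\<alpha> X) X A"
  shows "block_op A \<in> C"
proof -
  have "\<exists>S\<in>C. opnorm (op_diff (block_op A) S) < \<epsilon>" if "\<epsilon> > 0" for \<epsilon>
  proof -
    define \<eta> where "\<eta> = \<epsilon> / 8"
    define M :: int where "M = \<lceil>3 * K / \<eta>\<rceil> + 1"
    have \<eta>: "\<eta> > 0"
      using that by (simp add: \<eta>_def)
    have M: "3 * K / \<eta> + 1 \<le> of_int M"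
      unfolding M_def by linarith
    have "0 \<le> 3 * K / \<eta>"
      using blocks_bounded_nonneg[OF A(2)] \<eta> by simp
    then have "(0::real) \<le> of_int M"
      using M by linarith
    then have "{-M..M} \<noteq> {}"
      by simp
    have "block_op (spectral_proj \<eta> A k) \<in> C" for k
      using spectral_proj_in_Mset[OF \<alpha> A(1,3) \<eta>] spectral_proj_is_projection[OF A(1) \<eta>] proj by blast
    then have "block_op (spectral_sum \<eta> A {-M..M}) \<in> C"
      unfolding spectral_sum_def[abs_def] using \<open>{-M..M} \<noteq> {}\<close> by (intro cstar_subalg_block_op_sum[OF C]) auto
    moreover have "blocks_bounded (\<lambda>n i j. A n i j - spectral_sum \<eta> A {-M..M} n i j) (2 * \<eta>)"
      using spectral_sum_error[OF A(1,2) \<eta> M] by (simp add: blocks_bounded_def)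
    then have "opnorm (op_diff (block_op A) (block_op (spectral_sum \<eta> A {-M..M}))) \<le> 2 * (2 * \<eta>)"
      unfolding op_diff_block_op by (rule opnorm_block_op_le)
    then have "opnorm (op_diff (block_op A) (block_op (spectral_sum \<eta> A {-M..M}))) < \<epsilon>"
      using that by (simp add: \<eta>_def)
    ultimately show ?thesis
      by blast
  qed
  then show ?thesis
    using C block_op_bounded[OF A(2)] unfolding is_cstar_subalg_def by blast
qed

lemma Mset_subset_cstar:
  assumes C: "is_cstar_subalg C" and proj: "{P \<in> Mset \<X> \<alpha>. is_projection P} \<subseteq> C"
    and \<alpha>: "\<forall>X\<in>\<X>. \<bar>\<alpha> X\<bar> \<le> 1"
  shows "Mset \<X> \<alpha> \<subseteq> C"
proof
  fix T
  assume "T \<in> Mset \<X> \<alpha>"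
  then obtain K where K: "blocks_bounded (block_entry T) K" and T: "T = block_op (block_entry T)"
    and fdiag: "\<forall>X\<in>\<X>. asymp_fdiagonal (\<alpha> X) X (block_entry T)"
    by (rule Mset_block_op[OF \<alpha>])
  define B where "B = block_entry T"
  define H where "H = (\<lambda>n i j. (1 / 2) * (B n i j + blocks_adj B n i j))"
  define G where "G = (\<lambda>n i j. (- \<i> / 2) * (B n i j - blocks_adj B n i j))"
  have "hermitian_blocks H" "hermitian_blocks G"
    by (auto simp: hermitian_blocks_def H_def G_def blocks_adj_def algebra_simps)
  moreover have "blocks_bounded H (cmod (1 / 2) * (K + K))" "blocks_bounded G (cmod (- \<i> / 2) * (K + K))"
    unfolding H_def G_def B_def
    using K by (intro blocks_bounded_scale blocks_bounded_add blocks_bounded_diff blocks_bounded_adj; assumption)+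
  moreover have "\<forall>X\<in>\<X>. asymp_fdiagonal (\<alpha> X) X H" "\<forall>X\<in>\<X>. asymp_fdiagonal (\<alpha> X) X G"
    unfolding H_def G_def B_def
    using fdiag by (intro ballI asymp_fdiagonal_scale asymp_fdiagonal_add asymp_fdiagonal_diff asymp_fdiagonal_adj; blast)+
  ultimately have "block_op H \<in> C" "block_op G \<in> C"
    using hermitian_block_op_in_cstar[OF C proj \<alpha>] by blast+
  then have "op_add (block_op H) (op_scale \<i> (block_op G)) \<in> C"
    using C unfolding is_cstar_subalg_def by blast
  moreover have "op_add (block_op H) (op_scale \<i> (block_op G)) = T"
    unfolding op_scale_block_op op_add_block_op
    by (subst T) (simp add: H_def G_def B_def blocks_adj_def algebra_simps)
  ultimately show "T \<in> C"
    by simp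
qed

theorem lemma4p18:
  fixes \<X> :: "nat set set" and \<alpha> :: "nat set \<Rightarrow> real"
  assumes "wide \<X>" and "coherent \<X> \<alpha>"
  shows "cstar_gen {P \<in> Mset \<X> \<alpha>. is_projection P} = Mset \<X> \<alpha>"
proof -
  have \<alpha>: "\<forall>X\<in>\<X>. \<bar>\<alpha> X\<bar> \<le> 1"
    using assms(2) unfolding coherent_def by force
  show ?thesis
    unfolding cstar_gen_def
  proof (rule antisym)
    show "\<Inter> {C. {P \<in> Mset \<X> \<alpha>. is_projection P} \<subseteq> C \<and> is_cstar_subalg C} \<subseteq> Mset \<X> \<alpha>"
      using Mset_cstar_subalg[OF \<alpha>] by (intro Inter_lower) blast
    show "Mset \<X> \<alpha> \<subseteq> \<Inter> {C. {P \<in> Mset \<X> \<alpha>. is_projection P} \<subseteq> C \<and> is_cstar_subalg C}"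
      using Mset_subset_cstar[OF _ _ \<alpha>] by blast
  qed
qed

end
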